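(* Let $\mathscr{D}$ be a nonnegative integer-valued random variable with $\mathbb{P}(\mathscr{D}>t)=\mathcal{L}(t)t^{-\gamma}$, $\mathcal{L}$ slowly varying, $1<\gamma<2$. Let $D_1,\dots,D_n$ be i.i.d. copies and consider the configuration model with these degrees and the erased configuration model obtained from it. Then for every integer $p\ge0$ and every $\delta>0$, \[ \frac{\sum_{i=1}^nD_i^pY_i}{n^{\frac p\gamma+2-\gamma+\delta}}\to0\quad\text{and}\quad\frac{\sum_{1\le i<j\le n}Z_{ij}D_iD_j}{n^{\frac2\gamma+2-\gamma+\delta}}\to0 \] in probability.
   Context: Configuration model: vertex $i$ gets $D_i$ half-edges (one added if the sum is odd; ignored), paired uniformly at random; $X_{ij}$ is the number of edges between $i\neq j$, $X_{ii}$ the number of self-loops at $i$. The erased configuration model removes all self-loops and merges multiple edges into single edges. $Z_{ij}$ is the number of edges between $i$ and $j$ that are removed ($Z_{ii}=X_{ii}$, $Z_{ij}=X_{ij}-\mathbf 1\{X_{ij}>0\}$ for $i\ne j$), and $Y_i=\sum_{j=1}^nZ_{ij}=X_{ii}+\sum_{j\ne i}(X_{ij}-\mathbf 1\{X_{ij}>0\})$ is the number of removed stubs of vertex $i$. *)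

theory Defs
  imports "HOL-Probability.Probability"
begin

definition slowly_varying :: "(real \<Rightarrow> real) \<Rightarrow> bool" where
  "slowly_varying L \<longleftrightarrow> (\<forall>\<^sub>F x in at_top. L x > 0) \<and>
     (\<forall>a>0. ((\<lambda>x. L (a * x) / L x) \<longlongrightarrow> 1) at_top)"

definition tail :: "nat pmf \<Rightarrow> real \<Rightarrow> real" where
  "tail d t = measure_pmf.prob d {k. real k > t}"

definition adj_deg :: "nat \<Rightarrow> (nat \<Rightarrow> nat) \<Rightarrow> nat \<Rightarrow> nat" where
  "adj_deg n D i = (if odd (\<Sum>j<n. D j) \<and> i = n - 1 then D i + 1 else D i)"

definition halfedges :: "nat \<Rightarrow> (nat \<Rightarrow> nat) \<Rightarrow> (nat \<times> nat) set" where
  "halfedges n D = {(i, k). i < n \<and> k < adj_deg n D i}"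

definition matchings :: "'a set \<Rightarrow> ('a \<Rightarrow> 'a) set" where
  "matchings H = {m. (\<forall>x\<in>H. m x \<in> H \<and> m x \<noteq> x \<and> m (m x) = x) \<and> (\<forall>x. x \<notin> H \<longrightarrow> m x = x)}"

text \<open>Configuration model on n vertices: i.i.d. degrees D_0..D_{n-1} with law d
  (D_i = 0 for i >= n), then a uniformly random pairing of the half-edges.\<close>
definition CM :: "nat pmf \<Rightarrow> nat \<Rightarrow> ((nat \<Rightarrow> nat) \<times> (nat \<times> nat \<Rightarrow> nat \<times> nat)) pmf" where
  "CM d n = do { D \<leftarrow> Pi_pmf {..<n} 0 (\<lambda>_. d);
                 m \<leftarrow> pmf_of_set (matchings (halfedges n D));
                 return_pmf (D, m) }"

text \<open>X_ij: number of edges between i and j (i \<noteq> j); X_ii: number of self-loops at i.\<close>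
definition Xe :: "nat \<Rightarrow> (nat \<Rightarrow> nat) \<Rightarrow> (nat \<times> nat \<Rightarrow> nat \<times> nat) \<Rightarrow> nat \<Rightarrow> nat \<Rightarrow> nat" where
  "Xe n D m i j = (if i = j
      then card {h \<in> halfedges n D. fst h = i \<and> fst (m h) = i} div 2
      else card {h \<in> halfedges n D. fst h = i \<and> fst (m h) = j})"

text \<open>Z_ij: number of removed edges between i and j.\<close>
definition Ze :: "nat \<Rightarrow> (nat \<Rightarrow> nat) \<Rightarrow> (nat \<times> nat \<Rightarrow> nat \<times> nat) \<Rightarrow> nat \<Rightarrow> nat \<Rightarrow> nat" where
  "Ze n D m i j = (if i = j then Xe n D m i i
      else Xe n D m i j - (if Xe n D m i j > 0 then 1 else 0))"

definition Ye :: "nat \<Rightarrow> (nat \<Rightarrow> nat) \<Rightarrow> (nat \<times> nat \<Rightarrow> nat \<times> nat) \<Rightarrow> nat \<Rightarrow> nat" where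
  "Ye n D m i = (\<Sum>j<n. Ze n D m i j)"

end

theory Submission
  imports Defs
begin

text \<open>Conditionally on the degrees, the number of edges between the d_i and d_j half-edges of
  vertices i and j in a uniform matching has mean at most a = d_i d_j / (N - 1) and second
  factorial moment at most a^2 (counting matchings by symmetry), so the mean of Z_ij is at most
  min(a, a^2) \<le> a^s for every s in [1, 2]; self-loops at i contribute at most d_i^2 / (N - 1).
  Take s = \<gamma> - \<eta> for a small \<eta>. By Potter's bound for the regularly varying tail, with
  probability tending to one the maximal degree is at most n^(1/\<gamma> + \<eta>), the sum of the
  (D_i + 1)^s is at most n^(1 + \<eta>) (Markov, via a dyadic bound on truncated moments) and
  N is of order n (Hoeffding). On this event both conditional means are bounded by powers of n
  that are o(n^T) once \<eta> is small compared to \<delta>, and Markov's inequality over the uniform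
  matching concludes.\<close>

lemma transpose_conj_in_matchings:
  assumes "m \<in> matchings H" "v \<in> H" "w \<in> H"
  shows "Transposition.transpose v w \<circ> m \<circ> Transposition.transpose v w \<in> matchings H"
proof -
  let ?t = "Transposition.transpose v w"
  have m: "\<And>x. x \<in> H \<Longrightarrow> m x \<in> H \<and> m x \<noteq> x \<and> m (m x) = x" "\<And>x. x \<notin> H \<Longrightarrow> m x = x"
    using assms(1) by (auto simp: matchings_def)
  have t_mem: "?t x \<in> H \<longleftrightarrow> x \<in> H" for x
    using assms(2,3) by (auto simp: Transposition.transpose_def)
  show ?thesis unfolding matchings_def
  proof (intro CollectI conjI ballI allI impI)
    fix x assume "x \<in> H"
    then have tx: "?t x \<in> H" by (simp add: t_mem)
    show "(?t \<circ> m \<circ> ?t) x \<in> H" using m(1)[OF tx] by (simp add: t_mem)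
    show "(?t \<circ> m \<circ> ?t) x \<noteq> x" using m(1)[OF tx] by (metis comp_apply transpose_involutory)
    show "(?t \<circ> m \<circ> ?t) ((?t \<circ> m \<circ> ?t) x) = x" using m(1)[OF tx] by simp
  next
    fix x assume x: "x \<notin> H"
    then have "x \<noteq> v" "x \<noteq> w" using assms by auto
    then show "(?t \<circ> m \<circ> ?t) x = x" using m(2)[OF x] by simp
  qed
qed

lemma finite_matchings:
  assumes "finite H"
  shows "finite (matchings H)"
proof -
  have "matchings H \<subseteq> (\<lambda>f x. if x \<in> H then f x else x) ` (H \<rightarrow>\<^sub>E H)"
  proof
    fix m assume m: "m \<in> matchings H"
    then have "m = (\<lambda>x. if x \<in> H then restrict m H x else x)"
      by (auto simp: matchings_def fun_eq_iff)
    moreover have "restrict m H \<in> H \<rightarrow>\<^sub>E H"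
      using m by (auto simp: matchings_def)
    ultimately show "m \<in> (\<lambda>f x. if x \<in> H then f x else x) ` (H \<rightarrow>\<^sub>E H)"
      by blast
  qed
  moreover have "finite (H \<rightarrow>\<^sub>E H)"
    using assms by (simp add: finite_PiE)
  ultimately show ?thesis
    using finite_subset by blast
qed

lemma matchings_nonempty:
  "finite H \<Longrightarrow> even (card H) \<Longrightarrow> matchings H \<noteq> {}"
proof (induction "card H" arbitrary: H rule: less_induct)
  case less
  show ?case
  proof (cases "H = {}")
    case True
    then have "id \<in> matchings H"
      by (auto simp: matchings_def)
    then show ?thesis by blast
  next
    case False
    then obtain x where x: "x \<in> H" by blast
    have "card H \<noteq> 0"
      using False less.prems by simp
    then have "card H \<ge> 2"
      using less.prems(2) by presburger
    then have "card (H - {x}) \<ge> 1"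
      using x less.prems by simp
    then have "H - {x} \<noteq> {}"
      by (metis card.empty not_one_le_zero)
    then obtain y where y: "y \<in> H" "y \<noteq> x" by blast
    define H' where "H' = H - {x, y}"
    have card_H': "card H' = card H - 2"
      using x y less.prems by (simp add: H'_def card_Diff_subset)
    with \<open>card H \<ge> 2\<close> less.prems obtain m' where m': "m' \<in> matchings H'"
      using less.hyps[of H'] by (auto simp: H'_def)
    have "m'(x := y, y := x) \<in> matchings H"
      using m' x y unfolding matchings_def H'_def by auto
    then show ?thesis by blast
  qed
qed

text \<open>Conjugation by the transposition of v and w is a bijection between the members sending u
  to v and those sending u to w.\<close>
lemma card_fibre_mult_card_eq:
  fixes A :: "('a \<Rightarrow> 'a) set"
  assumes "finite A" "finite V"
    and maps_into: "\<And>m. m \<in> A \<Longrightarrow> m u \<in> V"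
    and u: "u \<notin> V"
    and closed: "\<And>m v w. m \<in> A \<Longrightarrow> v \<in> V \<Longrightarrow> w \<in> V
                   \<Longrightarrow> Transposition.transpose v w \<circ> m \<circ> Transposition.transpose v w \<in> A"
    and v: "v \<in> V"
  shows "card {m\<in>A. m u = v} * card V = card A"
proof -
  have same_card: "card {m\<in>A. m u = w} = card {m\<in>A. m u = v}" if w: "w \<in> V" for w
  proof -
    let ?c = "\<lambda>m. Transposition.transpose v w \<circ> m \<circ> Transposition.transpose v w"
    have fix_u: "Transposition.transpose v w u = u"
      using u v w by (intro transpose_apply_other) auto
    have "bij_betw ?c {m\<in>A. m u = v} {m\<in>A. m u = w}"
    proof (rule bij_betwI[where g = ?c])
      show "?c \<in> {m\<in>A. m u = v} \<rightarrow> {m\<in>A. m u = w}"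
        using closed v w fix_u by auto
      show "?c \<in> {m\<in>A. m u = w} \<rightarrow> {m\<in>A. m u = v}"
        using closed v w fix_u by auto
    qed (simp_all add: fun_eq_iff)
    then show ?thesis
      by (simp add: bij_betw_same_card)
  qed
  have "A = (\<Union>w\<in>V. {m\<in>A. m u = w})"
    using maps_into by auto
  moreover have "card (\<Union>w\<in>V. {m\<in>A. m u = w}) = (\<Sum>w\<in>V. card {m\<in>A. m u = w})"
    by (rule card_UN_disjoint) (use assms(1,2) in auto)
  ultimately have "card A = (\<Sum>w\<in>V. card {m\<in>A. m u = w})"
    by simp
  also have "\<dots> = card {m\<in>A. m u = v} * card V"
    using same_card by simp
  finally show ?thesis by simp
qed

lemma card_matchings_pair:
  assumes "finite H" "x \<in> H" "y \<in> H" "y \<noteq> x"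
  shows "card {m\<in>matchings H. m x = y} * (card H - 1) = card (matchings H)"
proof -
  have "card {m\<in>matchings H. m x = y} * card (H - {x}) = card (matchings H)"
  proof (rule card_fibre_mult_card_eq)
    show "m x \<in> H - {x}" if "m \<in> matchings H" for m
      using that assms(2) by (auto simp: matchings_def)
    show "Transposition.transpose a b \<circ> m \<circ> Transposition.transpose a b \<in> matchings H"
      if "m \<in> matchings H" "a \<in> H - {x}" "b \<in> H - {x}" for m a b
      using that transpose_conj_in_matchings[of m H a b] by simp
    show "finite (matchings H)"
      using finite_matchings assms(1) by blast
  qed (use assms in auto)
  then show ?thesis
    using assms by simp
qed

lemma card_matchings_two_pairs:
  assumes fin: "finite H" and in_H: "x \<in> H" "y \<in> H" "u \<in> H" "v \<in> H"
    and distinct: "distinct [x, y, u, v]"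
  shows "card {m\<in>matchings H. m x = y \<and> m u = v} * ((card H - 1) * (card H - 3))
         = card (matchings H)"
proof -
  let ?A = "{m\<in>matchings H. m x = y}"
  have "card {m\<in>?A. m u = v} * card (H - {x, y, u}) = card ?A"
  proof (rule card_fibre_mult_card_eq)
    show "m u \<in> H - {x, y, u}" if m: "m \<in> ?A" for m
    proof -
      have mm: "\<And>z. z \<in> H \<Longrightarrow> m z \<in> H \<and> m z \<noteq> z \<and> m (m z) = z" and "m x = y"
        using m by (auto simp: matchings_def)
      have "m u \<noteq> y"
        using mm[OF in_H(3)] mm[OF in_H(1)] \<open>m x = y\<close> distinct by (metis distinct_length_2_or_more)
      moreover have "m u \<noteq> x"
        using mm[OF in_H(1)] mm[OF in_H(3)] \<open>m x = y\<close> distinct by (metis distinct_length_2_or_more)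
      ultimately show ?thesis
        using mm[OF in_H(3)] by blast
    qed
    show "Transposition.transpose a b \<circ> m \<circ> Transposition.transpose a b \<in> ?A"
      if "m \<in> ?A" "a \<in> H - {x, y, u}" "b \<in> H - {x, y, u}" for m a b
    proof -
      have "Transposition.transpose a b x = x" "Transposition.transpose a b y = y"
        using that(2,3) by (auto intro: transpose_apply_other)
      then show ?thesis
        using that transpose_conj_in_matchings[of m H a b] by simp
    qed
    show "finite ?A"
      using finite_matchings[OF fin] by simp
  qed (use fin in_H distinct in auto)
  moreover have "card (H - {x, y, u}) = card H - 3"
    using in_H distinct fin by (simp add: card_Diff_subset)
  moreover have "{m\<in>?A. m u = v} = {m\<in>matchings H. m x = y \<and> m u = v}"
    by auto
  ultimately have "card {m\<in>matchings H. m x = y \<and> m u = v} * (card H - 3) = card ?A"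
    by simp
  moreover have "card ?A * (card H - 1) = card (matchings H)"
    using card_matchings_pair[OF fin in_H(1,2)] distinct by auto
  moreover have "card {m\<in>matchings H. m x = y \<and> m u = v} * ((card H - 1) * (card H - 3))
      = card {m\<in>matchings H. m x = y \<and> m u = v} * (card H - 3) * (card H - 1)"
    by (simp only: mult_ac)
  ultimately show ?thesis
    by simp
qed

lemma card_matchings_pair_le:
  assumes fin: "finite H" and h: "h \<in> H"
  shows "real (card {m\<in>matchings H. m h = t}) \<le> real (card (matchings H)) / (real (card H) - 1)"
proof (cases "t \<in> H \<and> t \<noteq> h")
  case True
  have "{h, t} \<subseteq> H"
    using h True by auto
  then have "card {h, t} \<le> card H"
    using fin by (intro card_mono)
  moreover have "card {h, t} = 2"
    using True by auto
  ultimately have "card H \<ge> 2"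
    by simp
  then have "real (card H - 1) = real (card H) - 1"
    by (simp add: of_nat_diff)
  then have "real (card {m\<in>matchings H. m h = t}) * (real (card H) - 1) = real (card (matchings H))"
    using arg_cong[OF card_matchings_pair[OF fin h, of t], of real] True by simp
  moreover have "real (card H) - 1 > 0"
    using \<open>card H \<ge> 2\<close> by simp
  ultimately show ?thesis
    by (simp add: field_simps)
next
  case False
  then have no_match: "{m\<in>matchings H. m h = t} = {}"
    using h by (auto simp: matchings_def)
  have "card H \<ge> 1"
    using fin h by (metis One_nat_def Suc_leI card_gt_0_iff empty_iff)
  then show ?thesis
    unfolding no_match by simp
qed

lemma card_matchings_two_pairs_le:
  assumes fin: "finite H" and in_H: "x \<in> H" "y \<in> H" "u \<in> H" "v \<in> H"
    and distinct: "distinct [x, y, u, v]" and "card H \<ge> 4"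
  shows "real (card {m\<in>matchings H. m x = y \<and> m u = v})
         \<le> real (card (matchings H)) / ((real (card H) - 1) * (real (card H) - 3))"
proof -
  have "real (card H - 1) = real (card H) - 1" "real (card H - 3) = real (card H) - 3"
    using \<open>card H \<ge> 4\<close> by (simp_all add: of_nat_diff)
  then have "real (card {m\<in>matchings H. m x = y \<and> m u = v})
      * ((real (card H) - 1) * (real (card H) - 3))
      = real (card (matchings H))"
    using arg_cong[OF card_matchings_two_pairs[OF fin in_H distinct], of real] by simp
  moreover have "(real (card H) - 1) * (real (card H) - 3) > 0"
    using \<open>card H \<ge> 4\<close> by simp
  ultimately show ?thesis
    by (simp add: field_simps)
qed

definition cross_edges :: "('a \<Rightarrow> 'a) \<Rightarrow> 'a set \<Rightarrow> 'a set \<Rightarrow> nat" where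
  "cross_edges m S T = card {h\<in>S. m h \<in> T}"

lemma real_card_filter_eq_sum:
  "finite A \<Longrightarrow> real (card {x\<in>A. P x}) = (\<Sum>x\<in>A. if P x then 1 else 0)"
  by (simp add: sum.inter_filter[symmetric])

lemma indicator_mem_eq_sum:
  "finite T \<Longrightarrow> (if x \<in> T then 1 else 0 :: real) = (\<Sum>t\<in>T. if x = t then 1 else 0)"
  by (simp add: sum.delta)

lemma sum_cross_edges_le:
  assumes fin: "finite H" and S: "S \<subseteq> H" and T: "T \<subseteq> H"
  shows "(\<Sum>m\<in>matchings H. real (cross_edges m S T))
     \<le> real (card (matchings H)) * real (card S) * real (card T) / (real (card H) - 1)"
proof -
  let ?A = "matchings H"
  let ?c = "real (card ?A) / (real (card H) - 1)"
  have fin_S: "finite S" and fin_T: "finite T"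
    using fin S T finite_subset by auto
  have "(\<Sum>m\<in>?A. real (cross_edges m S T)) = (\<Sum>m\<in>?A. \<Sum>h\<in>S. if m h \<in> T then 1 else 0)"
    using fin_S by (simp add: cross_edges_def real_card_filter_eq_sum)
  also have "\<dots> = (\<Sum>m\<in>?A. \<Sum>h\<in>S. \<Sum>t\<in>T. if m h = t then 1 else 0)"
    by (simp only: indicator_mem_eq_sum[OF fin_T])
  also have "\<dots> = (\<Sum>h\<in>S. \<Sum>t\<in>T. \<Sum>m\<in>?A. if m h = t then 1 else 0)"
    by (simp add: sum.swap[of _ ?A] sum.swap[of _ ?A T])
  also have "\<dots> = (\<Sum>h\<in>S. \<Sum>t\<in>T. real (card {m\<in>?A. m h = t}))"
    using finite_matchings[OF fin] by (simp add: real_card_filter_eq_sum)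
  also have "\<dots> \<le> (\<Sum>h\<in>S. \<Sum>t\<in>T. ?c)"
    using S by (intro sum_mono card_matchings_pair_le[OF fin]) auto
  finally show ?thesis
    by (simp add: ac_simps)
qed

lemma cross_edges_falling_square:
  assumes "finite S"
  shows "real (cross_edges m S T) * (real (cross_edges m S T) - 1) =
    (\<Sum>h1\<in>S. \<Sum>h2\<in>S - {h1}. (if m h1 \<in> T then 1 else 0) * (if m h2 \<in> T then 1 else 0))"
proof -
  let ?c = "\<lambda>h. (if m h \<in> T then 1 else 0::real)"
  have X: "real (cross_edges m S T) = (\<Sum>h\<in>S. ?c h)"
    using assms by (simp add: cross_edges_def real_card_filter_eq_sum)
  have "(\<Sum>h\<in>S. ?c h) * (\<Sum>h\<in>S. ?c h) = (\<Sum>h1\<in>S. \<Sum>h2\<in>S. ?c h1 * ?c h2)"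
    by (simp add: sum_product)
  also have "\<dots> = (\<Sum>h1\<in>S. ?c h1 * ?c h1 + (\<Sum>h2\<in>S - {h1}. ?c h1 * ?c h2))"
    using assms by (intro sum.cong refl) (simp add: sum.remove)
  also have "\<dots> = (\<Sum>h\<in>S. ?c h) + (\<Sum>h1\<in>S. \<Sum>h2\<in>S - {h1}. ?c h1 * ?c h2)"
  proof -
    have "?c h * ?c h = ?c h" for h
      by simp
    then show ?thesis
      by (simp only: sum.distrib)
  qed
  finally show ?thesis
    unfolding X by (simp add: algebra_simps)
qed

lemma sum_cross_edges_falling_square_le:
  assumes fin: "finite H" and S: "S \<subseteq> H" and T: "T \<subseteq> H" and disj: "S \<inter> T = {}"
    and "card H \<ge> 4"
  shows "(\<Sum>m\<in>matchings H. real (cross_edges m S T) * (real (cross_edges m S T) - 1))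
     \<le> real (card (matchings H)) * real (card S) ^ 2 * real (card T) ^ 2
        / ((real (card H) - 1) * (real (card H) - 3))"
proof -
  let ?A = "matchings H"
  define c where "c = real (card ?A) / ((real (card H) - 1) * (real (card H) - 3))"
  have fin_S: "finite S" and fin_T: "finite T"
    using fin S T finite_subset by auto
  have c_nonneg: "c \<ge> 0"
    using \<open>card H \<ge> 4\<close> unfolding c_def by (intro divide_nonneg_nonneg) auto
  have pair_indicator: "(if m h1 \<in> T then 1 else 0::real) * (if m h2 \<in> T then 1 else 0) =
     (\<Sum>t1\<in>T. \<Sum>t2\<in>T. if m h1 = t1 \<and> m h2 = t2 then 1 else 0)" for m h1 h2
  proof -
    have "(\<Sum>t1\<in>T. \<Sum>t2\<in>T. if m h1 = t1 \<and> m h2 = t2 then 1 else 0::real)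
        = (\<Sum>t1\<in>T. \<Sum>t2\<in>T. (if m h1 = t1 then 1 else 0) * (if m h2 = t2 then 1 else 0))"
      by (intro sum.cong refl) auto
    also have "\<dots> = (if m h1 \<in> T then 1 else 0) * (if m h2 \<in> T then 1 else 0)"
      by (simp only: indicator_mem_eq_sum[OF fin_T] sum_product)
    finally show ?thesis ..
  qed
  have "(\<Sum>m\<in>?A. real (cross_edges m S T) * (real (cross_edges m S T) - 1))
     = (\<Sum>m\<in>?A. \<Sum>h1\<in>S. \<Sum>h2\<in>S - {h1}. \<Sum>t1\<in>T. \<Sum>t2\<in>T. if m h1 = t1 \<and> m h2 = t2 then 1 else 0)"
    using fin_S by (simp add: cross_edges_falling_square pair_indicator)
  also have "\<dots> = (\<Sum>h1\<in>S. \<Sum>h2\<in>S - {h1}. \<Sum>t1\<in>T. \<Sum>t2\<in>T.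
                     \<Sum>m\<in>?A. if m h1 = t1 \<and> m h2 = t2 then 1 else 0)"
    by (simp add: sum.swap[of _ ?A])
  also have "\<dots> = (\<Sum>h1\<in>S. \<Sum>h2\<in>S - {h1}. \<Sum>t1\<in>T. \<Sum>t2\<in>T.
                     real (card {m\<in>?A. m h1 = t1 \<and> m h2 = t2}))"
    using finite_matchings[OF fin] by (simp add: real_card_filter_eq_sum)
  also have "\<dots> \<le> (\<Sum>h1\<in>S. \<Sum>h2\<in>S - {h1}. \<Sum>t1\<in>T. \<Sum>t2\<in>T. c)"
  proof (intro sum_mono)
    fix h1 h2 t1 t2
    assume h: "h1 \<in> S" "h2 \<in> S - {h1}" and t: "t1 \<in> T" "t2 \<in> T"
    show "real (card {m\<in>?A. m h1 = t1 \<and> m h2 = t2}) \<le> c"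
    proof (cases "t1 = t2")
      case True
      have no_match: "{m\<in>?A. m h1 = t1 \<and> m h2 = t2} = {}"
      proof (intro equals0I)
        fix m assume m: "m \<in> {m\<in>?A. m h1 = t1 \<and> m h2 = t2}"
        have "m (m h1) = h1" "m (m h2) = h2"
          using m h S by (auto simp: matchings_def)
        then show False
          using m True h by auto
      qed
      show ?thesis
        unfolding no_match using c_nonneg by simp
    next
      case False
      show ?thesis
        unfolding c_def by (rule card_matchings_two_pairs_le[OF fin])
          (use h t S T disj False \<open>card H \<ge> 4\<close> in auto)
    qed
  qed
  also have "\<dots> \<le> (\<Sum>h1\<in>S. \<Sum>h2\<in>S. \<Sum>t1\<in>T. \<Sum>t2\<in>T. c)"
    using fin_S c_nonneg by (intro sum_mono sum_mono2) (auto intro!: sum_nonneg)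
  also have "\<dots> = real (card S) * real (card S) * real (card T) * real (card T) * c"
    by simp
  finally show ?thesis
    by (simp add: c_def power2_eq_square field_simps)
qed

lemma halfedges_eq_Sigma: "halfedges n D = Sigma {..<n} (\<lambda>i. {..<adj_deg n D i})"
  by (auto simp: halfedges_def)

lemma finite_halfedges [simp]: "finite (halfedges n D)"
  by (simp add: halfedges_eq_Sigma)

lemma card_halfedges: "card (halfedges n D) = (\<Sum>i<n. adj_deg n D i)"
  by (simp add: halfedges_eq_Sigma card_SigmaI)

lemma sum_adj_deg:
  "(\<Sum>i<n. adj_deg n D i) = (\<Sum>i<n. D i) + (if odd (\<Sum>i<n. D i) \<and> n > 0 then 1 else 0)"
proof (cases "odd (\<Sum>i<n. D i) \<and> n > 0")
  case True
  then obtain k where n: "n = Suc k"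
    by (cases n) auto
  have "(\<Sum>i<n. adj_deg n D i) = (\<Sum>i<k. adj_deg n D i) + adj_deg n D k"
    using n by simp
  also have "(\<Sum>i<k. adj_deg n D i) = (\<Sum>i<k. D i)"
    by (intro sum.cong refl) (auto simp: adj_deg_def n)
  also have "adj_deg n D k = D k + 1"
    using True by (simp add: adj_deg_def n)
  finally show ?thesis
    using True n by simp
next
  case False
  then have "(\<Sum>i<n. adj_deg n D i) = (\<Sum>i<n. D i)"
    by (intro sum.cong refl) (auto simp: adj_deg_def)
  then show ?thesis
    using False by simp
qed

lemma even_card_halfedges: "even (card (halfedges n D))"
  unfolding card_halfedges sum_adj_deg by (cases n) auto

lemma sum_le_card_halfedges: "(\<Sum>i<n. D i) \<le> card (halfedges n D)"
  unfolding card_halfedges sum_adj_deg by simp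

lemma adj_deg_le: "adj_deg n D i \<le> D i + 1"
  by (auto simp: adj_deg_def)

lemma card_matchings_halfedges_pos: "card (matchings (halfedges n D)) > 0"
  using matchings_nonempty[of "halfedges n D"] even_card_halfedges
    finite_matchings[of "halfedges n D"]
  by (simp add: card_gt_0_iff)

definition stubs :: "nat \<Rightarrow> (nat \<Rightarrow> nat) \<Rightarrow> nat \<Rightarrow> (nat \<times> nat) set" where
  "stubs n D i = {h\<in>halfedges n D. fst h = i}"

lemma stubs_subset: "stubs n D i \<subseteq> halfedges n D"
  by (auto simp: stubs_def)

lemma card_stubs: "i < n \<Longrightarrow> card (stubs n D i) = adj_deg n D i"
proof -
  assume "i < n"
  then have "stubs n D i = Pair i ` {..<adj_deg n D i}"
    by (auto simp: stubs_def halfedges_def)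
  then show ?thesis
    by (simp add: card_image inj_on_def)
qed

lemma stubs_disjoint: "i \<noteq> j \<Longrightarrow> stubs n D i \<inter> stubs n D j = {}"
  by (auto simp: stubs_def)

lemma Xe_eq_cross_edges:
  assumes "m \<in> matchings (halfedges n D)" "i \<noteq> j"
  shows "Xe n D m i j = cross_edges m (stubs n D i) (stubs n D j)"
proof -
  have "{h\<in>halfedges n D. fst h = i \<and> fst (m h) = j} = {h\<in>stubs n D i. m h \<in> stubs n D j}"
    using assms(1) by (auto simp: stubs_def matchings_def)
  then show ?thesis
    using assms(2) by (simp add: Xe_def cross_edges_def)
qed

lemma Xe_self_le_cross_edges:
  assumes "m \<in> matchings (halfedges n D)"
  shows "Xe n D m i i \<le> cross_edges m (stubs n D i) (stubs n D i)"
proof -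
  have "{h\<in>halfedges n D. fst h = i \<and> fst (m h) = i} = {h\<in>stubs n D i. m h \<in> stubs n D i}"
    using assms by (auto simp: stubs_def matchings_def)
  then show ?thesis
    by (simp add: Xe_def cross_edges_def)
qed

lemma real_diff_pos_le_choose2:
  "real (x - (if x > 0 then 1 else 0)) \<le> real x * (real x - 1) / 2"
proof (cases "x \<ge> 2")
  case True
  then have "2 * (real x - 1) \<le> real x * (real x - 1)"
    by (intro mult_right_mono) auto
  with True show ?thesis
    by (simp add: of_nat_diff)
next
  case False
  then have "x = 0 \<or> x = 1"
    by auto
  then show ?thesis
    by auto
qed

lemma le_powr_of_le_self_and_square:
  fixes \<alpha> s :: real
  assumes "\<alpha> \<ge> 0" "1 \<le> s" "s \<le> 2" "B \<le> \<alpha>" "B \<le> \<alpha>\<^sup>2"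
  shows "B \<le> \<alpha> powr s"
proof (cases "\<alpha> \<ge> 1")
  case True
  then have "\<alpha> powr 1 \<le> \<alpha> powr s"
    using assms by (intro powr_mono) auto
  then show ?thesis
    using assms True by simp
next
  case False
  show ?thesis
  proof (cases "\<alpha> = 0")
    case True
    then show ?thesis
      using assms by simp
  next
    case \<alpha>_pos: False
    then have "\<alpha> powr 2 \<le> \<alpha> powr s"
      using assms False by (intro powr_mono') auto
    then show ?thesis
      using assms \<alpha>_pos by (simp add: powr_realpow)
  qed
qed

text \<open>The mean of Ze is bounded both by the first moment a = d_i d_j / (N - 1) of the number
  of edges between i and j and by half its second factorial moment, at most a^2; hence by
  a^s for every s in [1, 2].\<close>
lemma sum_Ze_le_powr:
  assumes i: "i < n" and j: "j < n" and "i \<noteq> j" and N: "card (halfedges n D) \<ge> 5"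
    and s: "1 \<le> s" "s \<le> 2"
  shows "(\<Sum>m\<in>matchings (halfedges n D). real (Ze n D m i j))
     \<le> real (card (matchings (halfedges n D)))
        * (real (adj_deg n D i) * real (adj_deg n D j) / (real (card (halfedges n D)) - 1)) powr s"
proof -
  let ?A = "matchings (halfedges n D)" and ?N = "real (card (halfedges n D))"
  let ?S = "stubs n D i" and ?T = "stubs n D j" and ?c = "real (card ?A)"
  let ?\<alpha> = "real (adj_deg n D i) * real (adj_deg n D j) / (?N - 1)"
  let ?X = "\<lambda>m. real (cross_edges m ?S ?T)"
  have c_pos: "?c > 0"
    using card_matchings_halfedges_pos by simp
  have Ze_le: "real (Ze n D m i j) \<le> ?X m" "real (Ze n D m i j) \<le> ?X m * (?X m - 1) / 2"
    if "m \<in> ?A" for m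
    using Xe_eq_cross_edges[OF that \<open>i \<noteq> j\<close>] real_diff_pos_le_choose2[of "Xe n D m i j"] \<open>i \<noteq> j\<close>
    by (auto simp: Ze_def)
  have "(\<Sum>m\<in>?A. real (Ze n D m i j)) \<le> (\<Sum>m\<in>?A. ?X m)"
    using Ze_le by (intro sum_mono) auto
  also have "\<dots> \<le> ?c * real (card ?S) * real (card ?T) / (?N - 1)"
    by (rule sum_cross_edges_le) (auto simp: stubs_subset)
  also have "\<dots> = ?c * ?\<alpha>"
    using i j by (simp add: card_stubs)
  finally have first: "(\<Sum>m\<in>?A. real (Ze n D m i j)) / ?c \<le> ?\<alpha>"
    using c_pos by (simp add: field_simps)
  have "(\<Sum>m\<in>?A. real (Ze n D m i j)) \<le> (\<Sum>m\<in>?A. ?X m * (?X m - 1)) / 2"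
    using Ze_le by (simp add: sum_divide_distrib sum_mono)
  also have "\<dots> \<le> (?c * real (card ?S) ^ 2 * real (card ?T) ^ 2 / ((?N - 1) * (?N - 3))) / 2"
    by (intro divide_right_mono sum_cross_edges_falling_square_le)
      (use N stubs_disjoint[OF \<open>i \<noteq> j\<close>] in \<open>auto simp: stubs_subset\<close>)
  also have "\<dots> = ?c * ?\<alpha>\<^sup>2 * ((?N - 1) / (2 * (?N - 3)))"
  proof -
    have "?\<alpha> * (?N - 1) = real (card ?S) * real (card ?T)"
      using i j N by (simp add: card_stubs)
    then have "real (card ?S) ^ 2 * real (card ?T) ^ 2 = ?\<alpha>\<^sup>2 * (?N - 1)\<^sup>2"
      by (metis power_mult_distrib)
    moreover have "?N - 1 \<noteq> 0" "?N - 3 \<noteq> 0"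
      using N by auto
    ultimately show ?thesis
      by (simp add: mult.assoc power2_eq_square divide_simps)
  qed
  also have "\<dots> \<le> ?c * ?\<alpha>\<^sup>2"
    using N c_pos by (intro mult_left_le) (auto simp: field_simps)
  finally have second: "(\<Sum>m\<in>?A. real (Ze n D m i j)) / ?c \<le> ?\<alpha>\<^sup>2"
    using c_pos by (simp add: field_simps)
  have "?\<alpha> \<ge> 0"
    using N by simp
  with first second s have "(\<Sum>m\<in>?A. real (Ze n D m i j)) / ?c \<le> ?\<alpha> powr s"
    by (intro le_powr_of_le_self_and_square)
  then show ?thesis
    using c_pos by (simp add: field_simps)
qed

lemma sum_Ze_self_le:
  assumes "i < n" "card (halfedges n D) \<ge> 5"
  shows "(\<Sum>m\<in>matchings (halfedges n D). real (Ze n D m i i))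
     \<le> real (card (matchings (halfedges n D))) * real (adj_deg n D i) ^ 2
        / (real (card (halfedges n D)) - 1)"
proof -
  have "(\<Sum>m\<in>matchings (halfedges n D). real (Ze n D m i i))
      \<le> (\<Sum>m\<in>matchings (halfedges n D). real (cross_edges m (stubs n D i) (stubs n D i)))"
    using Xe_self_le_cross_edges by (intro sum_mono) (auto simp: Ze_def)
  also have "\<dots> \<le> real (card (matchings (halfedges n D)))
      * real (card (stubs n D i)) * real (card (stubs n D i)) / (real (card (halfedges n D)) - 1)"
    by (rule sum_cross_edges_le) (auto simp: stubs_subset)
  finally show ?thesis
    using assms by (simp add: card_stubs power2_eq_square)
qed

lemma sum_matchings_weighted_Ye_le:
  assumes N: "card (halfedges n D) \<ge> 5" and s: "1 \<le> s" "s \<le> 2"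
  shows "(\<Sum>m\<in>matchings (halfedges n D). \<Sum>i<n. real (D i) ^ p * real (Ye n D m i))
     \<le> real (card (matchings (halfedges n D))) * (\<Sum>i<n. real (D i) ^ p *
          (real (adj_deg n D i) ^ 2 / (real (card (halfedges n D)) - 1)
           + (\<Sum>j<n. (real (adj_deg n D i) * real (adj_deg n D j)
                       / (real (card (halfedges n D)) - 1)) powr s)))"
proof -
  let ?A = "matchings (halfedges n D)" and ?N = "real (card (halfedges n D))"
  let ?c = "real (card ?A)"
  let ?a = "\<lambda>i. real (adj_deg n D i)"
  have Ye_split: "real (Ye n D m i) = real (Ze n D m i i) + (\<Sum>j\<in>{..<n} - {i}. real (Ze n D m i j))"
    if "i < n" for m i
    using that by (simp add: Ye_def sum.remove[of "{..<n}" i])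
  have per_vertex: "(\<Sum>m\<in>?A. real (Ye n D m i))
      \<le> ?c * ?a i ^ 2 / (?N - 1) + (\<Sum>j<n. ?c * (?a i * ?a j / (?N - 1)) powr s)"
    if i: "i < n" for i
  proof -
    have "(\<Sum>m\<in>?A. real (Ye n D m i))
        = (\<Sum>m\<in>?A. real (Ze n D m i i)) + (\<Sum>j\<in>{..<n} - {i}. \<Sum>m\<in>?A. real (Ze n D m i j))"
      using i by (simp add: Ye_split sum.distrib sum.swap[of _ ?A])
    also have "\<dots> \<le> ?c * ?a i ^ 2 / (?N - 1)
        + (\<Sum>j\<in>{..<n} - {i}. ?c * (?a i * ?a j / (?N - 1)) powr s)"
      using i N s by (intro add_mono sum_mono sum_Ze_self_le sum_Ze_le_powr) auto
    also have "\<dots> \<le> ?c * ?a i ^ 2 / (?N - 1) + (\<Sum>j<n. ?c * (?a i * ?a j / (?N - 1)) powr s)"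
      by (intro add_left_mono sum_mono2) auto
    finally show ?thesis .
  qed
  have "(\<Sum>m\<in>?A. \<Sum>i<n. real (D i) ^ p * real (Ye n D m i))
      = (\<Sum>i<n. real (D i) ^ p * (\<Sum>m\<in>?A. real (Ye n D m i)))"
    by (simp add: sum.swap[of _ ?A] sum_distrib_left)
  also have "\<dots> \<le> (\<Sum>i<n. real (D i) ^ p
      * (?c * ?a i ^ 2 / (?N - 1) + (\<Sum>j<n. ?c * (?a i * ?a j / (?N - 1)) powr s)))"
    using per_vertex by (intro sum_mono mult_left_mono) auto
  also have "\<dots> = ?c * (\<Sum>i<n. real (D i) ^ p
      * (?a i ^ 2 / (?N - 1) + (\<Sum>j<n. (?a i * ?a j / (?N - 1)) powr s)))"
    by (simp add: sum_distrib_left sum_distrib_right algebra_simps)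
  finally show ?thesis .
qed

lemma sum_matchings_weighted_Ze_le:
  assumes N: "card (halfedges n D) \<ge> 5" and s: "1 \<le> s" "s \<le> 2"
  shows "(\<Sum>m\<in>matchings (halfedges n D). \<Sum>j<n. \<Sum>i<j. real (Ze n D m i j) * real (D i) * real (D j))
     \<le> real (card (matchings (halfedges n D))) * (\<Sum>j<n. \<Sum>i<j. real (D i) * real (D j) *
           (real (adj_deg n D i) * real (adj_deg n D j) / (real (card (halfedges n D)) - 1)) powr s)"
proof -
  let ?A = "matchings (halfedges n D)" and ?N = "real (card (halfedges n D))"
  let ?c = "real (card ?A)"
  let ?\<alpha> = "\<lambda>i j. (real (adj_deg n D i) * real (adj_deg n D j) / (?N - 1)) powr s"
  have "(\<Sum>m\<in>?A. \<Sum>j<n. \<Sum>i<j. real (Ze n D m i j) * real (D i) * real (D j))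
      = (\<Sum>j<n. \<Sum>i<j. (\<Sum>m\<in>?A. real (Ze n D m i j)) * (real (D i) * real (D j)))"
    by (simp add: sum.swap[of _ ?A] sum_distrib_right mult.assoc)
  also have "\<dots> \<le> (\<Sum>j<n. \<Sum>i<j. (?c * ?\<alpha> i j) * (real (D i) * real (D j)))"
    using N s by (intro sum_mono mult_right_mono sum_Ze_le_powr) auto
  also have "\<dots> = ?c * (\<Sum>j<n. \<Sum>i<j. real (D i) * real (D j) * ?\<alpha> i j)"
    by (simp add: sum_distrib_left algebra_simps)
  finally show ?thesis .
qed

lemma degree_ratio_powr_le:
  assumes Q: "0 < Q" "Q \<le> real (card (halfedges n D)) - 1" and "0 \<le> s"
  shows "(real (adj_deg n D i) * real (adj_deg n D j) / (real (card (halfedges n D)) - 1)) powr s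
     \<le> (real (D i) + 1) powr s * (real (D j) + 1) powr s / Q powr s"
proof -
  let ?N = "real (card (halfedges n D))"
  have a_le: "real (adj_deg n D k) \<le> real (D k) + 1" for k
    using adj_deg_le[of n D k] by linarith
  have "real (adj_deg n D i) * real (adj_deg n D j) / (?N - 1)
      \<le> (real (D i) + 1) * (real (D j) + 1) / (?N - 1)"
    using Q a_le by (intro divide_right_mono mult_mono) auto
  also have "\<dots> \<le> (real (D i) + 1) * (real (D j) + 1) / Q"
    using Q by (intro divide_left_mono) auto
  finally have "(real (adj_deg n D i) * real (adj_deg n D j) / (?N - 1)) powr s
      \<le> ((real (D i) + 1) * (real (D j) + 1) / Q) powr s"
    using Q assms(3) by (intro powr_mono2) auto
  also have "\<dots> = (real (D i) + 1) powr s * (real (D j) + 1) powr s / Q powr s"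
    using Q by (simp add: powr_divide powr_mult)
  finally show ?thesis .
qed

lemma weighted_Ye_bound_le:
  assumes "0 \<le> M" and D_le: "\<And>i. i < n \<Longrightarrow> real (D i) \<le> M"
    and W: "(\<Sum>i<n. (real (D i) + 1) powr s) \<le> W"
    and Q: "0 < Q" "Q \<le> real (card (halfedges n D)) - 1"
    and s: "1 \<le> s" "s \<le> 2"
  shows "(\<Sum>i<n. real (D i) ^ p * (real (adj_deg n D i) ^ 2 / (real (card (halfedges n D)) - 1)
          + (\<Sum>j<n. (real (adj_deg n D i) * real (adj_deg n D j)
                       / (real (card (halfedges n D)) - 1)) powr s)))
        \<le> (M + 1) ^ p * (M + 1) powr (2 - s) * W / Q + (M + 1) ^ p * W\<^sup>2 / Q powr s"
proof -
  let ?N = "real (card (halfedges n D))"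
  let ?a = "\<lambda>i. real (adj_deg n D i)" and ?b = "\<lambda>i. real (D i) + 1"
  define R where "R = M + 1"
  have R: "R \<ge> 1"
    using \<open>0 \<le> M\<close> by (simp add: R_def)
  have W_nonneg: "0 \<le> (\<Sum>i<n. ?b i powr s)"
    by (intro sum_nonneg) auto
  have square_le: "?a i ^ 2 / (?N - 1) \<le> ?b i powr s * R powr (2 - s) / Q" if "i < n" for i
  proof -
    have "?a i ^ 2 \<le> ?b i ^ 2"
      using adj_deg_le[of n D i] by (intro power_mono) auto
    also have "\<dots> = ?b i powr s * ?b i powr (2 - s)"
    proof -
      have "?b i powr s * ?b i powr (2 - s) = ?b i powr (real 2)"
        by (simp add: powr_add[symmetric])
      also have "\<dots> = ?b i ^ 2"
        by (rule powr_realpow) (simp add: add_pos_nonneg)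
      finally show ?thesis ..
    qed
    also have "\<dots> \<le> ?b i powr s * R powr (2 - s)"
      using D_le[OF that] s by (intro mult_left_mono powr_mono2) (auto simp: R_def)
    finally show ?thesis
      using Q by (intro divide_mono) auto
  qed
  have term_le: "real (D i) ^ p * (?a i ^ 2 / (?N - 1) + (\<Sum>j<n. (?a i * ?a j / (?N - 1)) powr s))
      \<le> R ^ p * (?b i powr s * R powr (2 - s) / Q + (\<Sum>j<n. ?b i powr s * ?b j powr s / Q powr s))"
    if i: "i < n" for i
  proof -
    have "?a i ^ 2 / (?N - 1) + (\<Sum>j<n. (?a i * ?a j / (?N - 1)) powr s)
        \<le> ?b i powr s * R powr (2 - s) / Q + (\<Sum>j<n. ?b i powr s * ?b j powr s / Q powr s)"
      using Q s by (intro add_mono square_le[OF i] sum_mono degree_ratio_powr_le) auto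
    moreover have "real (D i) ^ p \<le> R ^ p"
      using D_le[OF i] by (intro power_mono) (auto simp: R_def)
    moreover have "0 \<le> ?a i ^ 2 / (?N - 1) + (\<Sum>j<n. (?a i * ?a j / (?N - 1)) powr s)"
      using Q by (intro add_nonneg_nonneg sum_nonneg) auto
    ultimately show ?thesis
      using R by (intro mult_mono) auto
  qed
  have "(\<Sum>i<n. real (D i) ^ p * (?a i ^ 2 / (?N - 1) + (\<Sum>j<n. (?a i * ?a j / (?N - 1)) powr s)))
      \<le> (\<Sum>i<n. R ^ p * (?b i powr s * R powr (2 - s) / Q
                             + (\<Sum>j<n. ?b i powr s * ?b j powr s / Q powr s)))"
    using term_le by (intro sum_mono) auto
  also have "\<dots> = R ^ p * R powr (2 - s) * (\<Sum>i<n. ?b i powr s) / Q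
       + R ^ p * (\<Sum>i<n. ?b i powr s) * (\<Sum>j<n. ?b j powr s) / Q powr s"
    by (simp add: sum.distrib sum_distrib_left sum_distrib_right sum_divide_distrib algebra_simps)
  also have "\<dots> \<le> R ^ p * R powr (2 - s) * W / Q + R ^ p * W * W / Q powr s"
    using R W W_nonneg Q by (intro add_mono divide_right_mono mult_left_mono mult_mono) auto
  finally show ?thesis
    by (simp add: R_def power2_eq_square mult.assoc)
qed

lemma weighted_Ze_bound_le:
  assumes D_le: "\<And>i. i < n \<Longrightarrow> real (D i) \<le> M"
    and W: "(\<Sum>i<n. (real (D i) + 1) powr s) \<le> W"
    and Q: "0 < Q" "Q \<le> real (card (halfedges n D)) - 1"
    and s: "1 \<le> s"
  shows "(\<Sum>j<n. \<Sum>i<j. real (D i) * real (D j) *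
           (real (adj_deg n D i) * real (adj_deg n D j) / (real (card (halfedges n D)) - 1)) powr s)
        \<le> (M + 1)\<^sup>2 * W\<^sup>2 / Q powr s"
proof -
  let ?N = "real (card (halfedges n D))"
  let ?a = "\<lambda>i. real (adj_deg n D i)" and ?b = "\<lambda>i. real (D i) + 1"
  define R where "R = M + 1"
  have D_R: "real (D i) \<le> R" "0 \<le> R" if "i < n" for i
    using D_le[OF that] by (auto simp: R_def)
  have W_nonneg: "0 \<le> (\<Sum>i<n. ?b i powr s)"
    by (intro sum_nonneg) auto
  have "(\<Sum>j<n. \<Sum>i<j. real (D i) * real (D j) * (?a i * ?a j / (?N - 1)) powr s)
     \<le> (\<Sum>j<n. \<Sum>i<n. real (D i) * real (D j) * (?a i * ?a j / (?N - 1)) powr s)"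
    by (intro sum_mono sum_mono2) auto
  also have "\<dots> \<le> (\<Sum>j<n. \<Sum>i<n. R * R * (?b i powr s * ?b j powr s / Q powr s))"
    using D_R Q s by (intro sum_mono mult_mono degree_ratio_powr_le) auto
  also have "\<dots> = R * R * (\<Sum>i<n. ?b i powr s) * (\<Sum>j<n. ?b j powr s) / Q powr s"
    by (simp add: sum_distrib_left sum_distrib_right sum_divide_distrib algebra_simps)
  also have "\<dots> \<le> R * R * W * W / Q powr s"
    using W W_nonneg by (intro divide_right_mono mult_left_mono mult_mono) auto
  finally show ?thesis
    by (simp add: R_def power2_eq_square mult.assoc)
qed

lemma tail_le_1: "tail d t \<le> 1" by (simp add: tail_def)
lemma tail_antimono: "t \<le> u \<Longrightarrow> tail d u \<le> tail d t"
  unfolding tail_def by (intro measure_pmf.finite_measure_mono) auto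

lemma slowly_varying_doubling_bound:
  assumes sv: "slowly_varying L" and e: "e > 0"
  shows "\<exists>x0\<ge>1. \<forall>x\<ge>x0. L x > 0 \<and> L (2 * x) \<le> 2 powr e * L x"
proof -
  have pos: "\<forall>\<^sub>F x in at_top. L x > 0" and lim: "((\<lambda>x. L (2 * x) / L x) \<longlongrightarrow> 1) at_top"
    using sv by (auto simp: slowly_varying_def)
  have "1 < 2 powr e" using e by simp
  then have ev: "\<forall>\<^sub>F x in at_top. L (2 * x) / L x < 2 powr e"
    using lim order_tendstoD(2) by blast
  have "\<forall>\<^sub>F x in at_top. L x > 0 \<and> L (2 * x) / L x < 2 powr e"
    using pos ev by eventually_elim auto
  then obtain x1 where x1: "\<And>x. x \<ge> x1 \<Longrightarrow> L x > 0 \<and> L (2 * x) / L x < 2 powr e"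
    by (auto simp: eventually_at_top_linorder)
  have "\<forall>x\<ge>max x1 1. L x > 0 \<and> L (2 * x) \<le> 2 powr e * L x"
  proof (intro allI impI)
    fix x assume "max x1 1 \<le> x"
    then have "x \<ge> x1" by simp
    from x1[OF this] have "L x > 0" "L (2 * x) / L x < 2 powr e" by auto
    then show "L x > 0 \<and> L (2 * x) \<le> 2 powr e * L x"
      by (auto simp: divide_less_eq)
  qed
  then show ?thesis by (intro exI[of _ "max x1 1"]) auto
qed

lemma powr_bound_of_doubling_bound:
  fixes L :: "real \<Rightarrow> real"
  assumes x0: "x0 > 0" and "e \<ge> 0" and "K \<ge> 0"
    and doubling: "\<And>x. x \<ge> x0 \<Longrightarrow> L (2 * x) \<le> 2 powr e * L x"
    and initial: "\<And>x. x0 \<le> x \<Longrightarrow> x \<le> 2 * x0 \<Longrightarrow> L x \<le> K"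
    and "x \<ge> x0"
  shows "L x \<le> K * (x / x0) powr e"
proof -
  have dyadic: "x0 \<le> x \<Longrightarrow> x \<le> 2 ^ (k + 1) * x0 \<Longrightarrow> L x \<le> K * (x / x0) powr e" for k x
  proof (induction k arbitrary: x)
    case 0
    then have "L x \<le> K * 1"
      using initial by simp
    also have "\<dots> \<le> K * (x / x0) powr e"
      using 0 x0 \<open>e \<ge> 0\<close> \<open>K \<ge> 0\<close> by (intro mult_left_mono ge_one_powr_ge_zero) auto
    finally show ?case .
  next
    case (Suc k)
    show ?case
    proof (cases "x \<le> 2 ^ (k + 1) * x0")
      case True
      then show ?thesis
        using Suc by blast
    next
      case False
      have "x0 \<le> 2 ^ k * x0"
        using x0 by simp
      also have "\<dots> \<le> x / 2"
        using False by (simp add: field_simps)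
      finally have half: "x0 \<le> x / 2" .
      have "L x = L (2 * (x / 2))"
        by simp
      also have "\<dots> \<le> 2 powr e * L (x / 2)"
        using doubling half by blast
      also have "\<dots> \<le> 2 powr e * (K * (x / 2 / x0) powr e)"
        using Suc half by (intro mult_left_mono Suc.IH) (auto simp: field_simps)
      also have "\<dots> = K * (x / x0) powr e"
        using powr_mult[of 2 "x / 2 / x0" e] by simp
      finally show ?thesis .
    qed
  qed
  obtain k :: nat where "x / x0 < 2 ^ k"
    using real_arch_pow[of 2 "x / x0"] by auto
  then have "x < 2 ^ k * x0"
    using x0 by (simp add: field_simps)
  moreover have "(2::real) ^ k * x0 \<le> 2 ^ (k + 1) * x0"
    using x0 by simp
  ultimately have "x \<le> 2 ^ (k + 1) * x0"
    by linarith
  then show ?thesis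
    using dyadic \<open>x \<ge> x0\<close> by blast
qed

lemma tail_le_powr:
  assumes sv: "slowly_varying L" and tl: "\<forall>t>0. tail d t = L t * t powr (- \<gamma>)"
    and e: "0 < e" "e \<le> \<gamma>"
  shows "\<exists>C>0. \<forall>t>0. tail d t \<le> C * t powr (- (\<gamma> - e))"
proof -
  obtain x0 where x0: "x0 \<ge> 1" and dbl: "\<And>x. x \<ge> x0 \<Longrightarrow> L x > 0 \<and> L (2 * x) \<le> 2 powr e * L x"
    using slowly_varying_doubling_bound[OF sv e(1)] by blast
  have L_le: "L x \<le> x powr \<gamma>" if "x > 0" for x
  proof -
    have "L x = tail d x * x powr \<gamma>"
      using tl that by (simp add: powr_minus field_simps)
    also have "\<dots> \<le> 1 * x powr \<gamma>"
      by (intro mult_right_mono tail_le_1) auto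
    finally show ?thesis
      by simp
  qed
  define K where "K = (2 * x0) powr \<gamma>"
  have L_bound: "L x \<le> K * (x / x0) powr e" if "x \<ge> x0" for x
  proof (rule powr_bound_of_doubling_bound[where L = L])
    show "L x \<le> K" if "x0 \<le> x" "x \<le> 2 * x0" for x
      using L_le[of x] that x0 e by (auto simp: K_def intro: order_trans[OF _ powr_mono2])
  qed (use x0 e dbl that in \<open>auto simp: K_def\<close>)
  define C where "C = max (K * x0 powr (- e)) (x0 powr (\<gamma> - e))"
  have "x0 powr (\<gamma> - e) > 0"
    using x0 by simp
  then have C_pos: "C > 0"
    unfolding C_def by linarith
  show ?thesis
  proof (intro exI[of _ C] conjI allI impI C_pos)
    fix t :: real
    assume t: "t > 0"
    show "tail d t \<le> C * t powr (- (\<gamma> - e))"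
    proof (cases "t \<ge> x0")
      case True
      have "tail d t = L t * t powr (- \<gamma>)"
        using tl t by simp
      also have "\<dots> \<le> K * (t / x0) powr e * t powr (- \<gamma>)"
        using L_bound[OF True] by (intro mult_right_mono) auto
      also have "\<dots> = (K * x0 powr (- e)) * t powr (- (\<gamma> - e))"
        using t x0 by (simp add: powr_divide powr_minus powr_diff field_simps powr_add)
      also have "\<dots> \<le> C * t powr (- (\<gamma> - e))"
        by (intro mult_right_mono) (auto simp: C_def)
      finally show ?thesis .
    next
      case False
      have "tail d t \<le> 1"
        by (rule tail_le_1)
      also have "1 = x0 powr (\<gamma> - e) * x0 powr (- (\<gamma> - e))"
        using x0 by (simp add: powr_add[symmetric])
      also have "\<dots> \<le> x0 powr (\<gamma> - e) * t powr (- (\<gamma> - e))"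
        using False t e by (intro mult_left_mono powr_mono2') auto
      also have "\<dots> \<le> C * t powr (- (\<gamma> - e))"
        by (intro mult_right_mono) (auto simp: C_def)
      finally show ?thesis .
    qed
  qed
qed

lemma prob_positive_degree_pos:
  assumes sv: "slowly_varying L" and tl: "\<forall>t>0. tail d t = L t * t powr (- \<gamma>)"
  shows "measure_pmf.prob d {k. 1 \<le> k} > 0"
proof -
  obtain x0 where x0: "x0 \<ge> 1" and "L x0 > 0"
    using slowly_varying_doubling_bound[OF sv, of 1] by auto
  then have "0 < tail d x0"
    using tl by simp
  also have "\<dots> \<le> tail d (1/2)"
    using x0 by (intro tail_antimono) auto
  also have "tail d (1/2) = measure_pmf.prob d {k. 1 \<le> k}"
    unfolding tail_def by (rule arg_cong[where f = "measure_pmf.prob d"]) auto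
  finally show ?thesis .
qed

lemma integrable_measure_pmf_bounded:
  fixes f :: "'a \<Rightarrow> real"
  assumes "\<And>x. \<bar>f x\<bar> \<le> B"
  shows "integrable (measure_pmf M) f"
  by (rule measure_pmf.integrable_const_bound[where B = B]) (use assms in auto)

lemma measure_pmf_Markov:
  fixes u :: "'a \<Rightarrow> real"
  assumes "integrable (measure_pmf M) u" "\<And>x. 0 \<le> u x" "0 < c"
  shows "measure_pmf.prob M {x. c < u x} \<le> measure_pmf.expectation M u / c"
proof -
  have "measure_pmf.prob M {x. c < u x} \<le> measure_pmf.prob M {x\<in>space (measure_pmf M). u x \<ge> c}"
    by (intro measure_pmf.finite_measure_mono) auto
  also have "\<dots> \<le> measure_pmf.expectation M u / c"
    by (rule integral_Markov_inequality_measure) (use assms in auto)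
  finally show ?thesis .
qed

abbreviation iid_degrees :: "nat pmf \<Rightarrow> nat \<Rightarrow> (nat \<Rightarrow> nat) pmf" where
  "iid_degrees d n \<equiv> Pi_pmf {..<n} 0 (\<lambda>_. d)"

lemma map_pmf_iid_degrees_component: "i < n \<Longrightarrow> map_pmf (\<lambda>D. D i) (iid_degrees d n) = d"
  by (subst Pi_pmf_component) auto

lemma prob_exists_degree_gt_le:
  "measure_pmf.prob (iid_degrees d n) {D. \<exists>i<n. M < real (D i)} \<le> real n * tail d M"
proof -
  have "{D. \<exists>i<n. M < real (D i)} = (\<Union>i\<in>{..<n}. {D. M < real (D i)})" by auto
  then have "measure_pmf.prob (iid_degrees d n) {D. \<exists>i<n. M < real (D i)}
      \<le> (\<Sum>i\<in>{..<n}. measure_pmf.prob (iid_degrees d n) {D. M < real (D i)})"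
    by (simp add: measure_UNION_le)
  also have "\<dots> = (\<Sum>i\<in>{..<n}. tail d M)"
  proof (intro sum.cong refl)
    fix i assume i: "i \<in> {..<n}"
    have "measure_pmf.prob (iid_degrees d n) {D. M < real (D i)}
        = measure_pmf.prob (map_pmf (\<lambda>D. D i) (iid_degrees d n)) {k. M < real k}" by simp
    also have "\<dots> = tail d M" using i by (simp add: map_pmf_iid_degrees_component tail_def)
    finally show "measure_pmf.prob (iid_degrees d n) {D. M < real (D i)} = tail d M" .
  qed
  finally show ?thesis by simp
qed

lemma prob_sum_gt_le:
  fixes g :: "nat \<Rightarrow> real"
  assumes g0: "\<And>k. 0 \<le> g k" and gB: "\<And>k. g k \<le> B" and W: "W > 0"
  shows "measure_pmf.prob (iid_degrees d n) {D. W < (\<Sum>i<n. g (D i))}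
    \<le> real n * measure_pmf.expectation d g / W"
proof -
  have ig: "integrable (measure_pmf d) g"
    by (rule integrable_measure_pmf_bounded[where B = B]) (use g0 gB in \<open>auto simp: abs_le_iff\<close>)
  have "measure_pmf.prob (iid_degrees d n) {D. W < (\<Sum>i<n. g (D i))}
      \<le> measure_pmf.expectation (iid_degrees d n) (\<lambda>D. \<Sum>i<n. g (D i)) / W"
    by (rule measure_pmf_Markov)
      (use integrable_sum_Pi_pmf[of "{..<n}" "\<lambda>_. d" g] ig g0 W in \<open>auto intro: sum_nonneg\<close>)
  also have "measure_pmf.expectation (iid_degrees d n) (\<lambda>D. \<Sum>i<n. g (D i))
      = real n * measure_pmf.expectation d g"
    using expectation_sum_Pi_pmf[of "{..<n}" "\<lambda>_. d" g 0] ig by simp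
  finally show ?thesis .
qed

lemma powr_le_dyadic_sum:
  fixes x s :: real
  assumes "0 \<le> x" "x < 2 ^ J" "s \<ge> 0"
  shows "(x + 1) powr s
    \<le> 2 powr s + (\<Sum>j<J. 2 powr ((real j + 2) * s) * (if 2 ^ j \<le> x then 1 else 0))"
  using assms(1,2)
proof (induction J arbitrary: x rule: nat.induct)
  case zero
  then have "x < 1" by simp
  then have "(x + 1) powr s \<le> 2 powr s" using zero.prems assms(3) by (intro powr_mono2) auto
  then show ?case by simp
next
  case (Suc J)
  have nn: "0 \<le> 2 powr ((real J + 2) * s) * (if 2 ^ J \<le> x then 1 else 0)" by simp
  show ?case
  proof (cases "x < 2 ^ J")
    case True
    then show ?thesis using Suc.IH[of x] Suc.prems nn by simp
  next
    case False
    have "x + 1 \<le> 2 ^ (J + 2)"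
    proof -
      have "x + 1 < 2 ^ Suc J + 1" using Suc.prems by simp
      also have "(2::real) ^ Suc J + 1 \<le> 2 ^ (J + 2)"
      proof -
        have "(1::real) \<le> 2 ^ J" by (rule one_le_power) simp
        moreover have "(2::real) ^ Suc J = 2 * 2 ^ J" "(2::real) ^ (J + 2) = 4 * 2 ^ J" by simp_all
        ultimately show ?thesis by linarith
      qed
      finally show ?thesis by simp
    qed
    then have "(x + 1) powr s \<le> (2 ^ (J + 2)) powr s"
      using assms(3) Suc.prems by (intro powr_mono2) auto
    also have "(2::real) ^ (J + 2) = 2 powr (real J + 2)"
    proof -
      have "(2::real) powr (real J + 2) = 2 powr (real (J + 2))" by (simp add: add.commute)
      also have "\<dots> = 2 ^ (J + 2)" by (rule powr_realpow) simp
      finally show ?thesis by simp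
    qed
    also have "(2 powr (real J + 2)) powr s = 2 powr ((real J + 2) * s)" by (simp add: powr_powr)
    also have "\<dots> = 2 powr ((real J + 2) * s) * (if 2 ^ J \<le> x then 1 else 0)" using False by simp
    also have "\<dots> \<le> 2 powr s + (\<Sum>j<Suc J. 2 powr ((real j + 2) * s) * (if 2 ^ j \<le> x then 1 else 0))"
      by (simp add: sum_nonneg)
    finally show ?thesis .
  qed
qed

lemma expectation_truncated_powr_le_dyadic:
  fixes s M :: real
  assumes "0 \<le> s" "0 \<le> M" "M < 2 ^ J"
  shows "measure_pmf.expectation d (\<lambda>k. (min (real k) M + 1) powr s)
     \<le> 2 powr s + (\<Sum>j<J. 2 powr ((real j + 2) * s) * measure_pmf.prob d {k. 2 ^ j \<le> real k})"
proof -
  let ?I = "\<lambda>j. indicator {k. 2 ^ j \<le> real k} :: nat \<Rightarrow> real"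
  let ?g = "\<lambda>k. 2 powr s + (\<Sum>j<J. 2 powr ((real j + 2) * s) * ?I j k)"
  have int_ind: "integrable (measure_pmf d) (?I j)" for j
    by (rule integrable_measure_pmf_bounded[where B = 1]) (auto simp: indicator_def)
  have "(min (real k) M + 1) powr s
      \<le> 2 powr s + (\<Sum>j<J. 2 powr ((real j + 2) * s) * (if 2 ^ j \<le> min (real k) M then 1 else 0))"
    for k
    by (rule powr_le_dyadic_sum) (use assms in auto)
  also have "\<dots> k \<le> ?g k" for k
    by (intro add_left_mono sum_mono mult_left_mono) (auto simp: indicator_def)
  finally have "measure_pmf.expectation d (\<lambda>k. (min (real k) M + 1) powr s)
      \<le> measure_pmf.expectation d ?g"
    by (intro integral_mono integrable_measure_pmf_bounded[where B = "(M + 1) powr s"]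
        Bochner_Integration.integrable_add Bochner_Integration.integrable_sum
        Bochner_Integration.integrable_mult_right int_ind measure_pmf.integrable_const)
      (use assms in \<open>auto intro!: powr_mono2\<close>)
  also have "\<dots> = 2 powr s
      + (\<Sum>j<J. 2 powr ((real j + 2) * s) * measure_pmf.prob d {k. 2 ^ j \<le> real k})"
  proof -
    have "measure_pmf.expectation d ?g = measure_pmf.expectation d (\<lambda>k. 2 powr s)
        + measure_pmf.expectation d (\<lambda>k. \<Sum>j<J. 2 powr ((real j + 2) * s) * ?I j k)"
      by (intro Bochner_Integration.integral_add Bochner_Integration.integrable_sum
          Bochner_Integration.integrable_mult_right int_ind measure_pmf.integrable_const)
    also have "measure_pmf.expectation d (\<lambda>k. \<Sum>j<J. 2 powr ((real j + 2) * s) * ?I j k)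
        = (\<Sum>j<J. measure_pmf.expectation d (\<lambda>k. 2 powr ((real j + 2) * s) * ?I j k))"
      by (intro Bochner_Integration.integral_sum Bochner_Integration.integrable_mult_right int_ind)
    also have "\<dots> = (\<Sum>j<J. 2 powr ((real j + 2) * s) * measure_pmf.prob d {k. 2 ^ j \<le> real k})"
      by (intro sum.cong refl)
        (simp only: Bochner_Integration.integral_mult_right_zero integral_indicator, simp)
    finally show ?thesis
      by simp
  qed
  finally show ?thesis .
qed

lemma prob_ge_pow2_le:
  fixes C \<kappa> :: real
  assumes "\<forall>t>0. tail d t \<le> C * t powr (- \<kappa>)"
  shows "measure_pmf.prob d {k. 2 ^ j \<le> real k} \<le> C * 2 powr \<kappa> * 2 powr (- \<kappa> * real j)"
proof -
  have "{k. 2 ^ j \<le> real k} \<subseteq> {k. 2 ^ j / 2 < real k}"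
  proof
    fix k
    assume "k \<in> {k. 2 ^ j \<le> real k}"
    then have "(2::real) ^ j \<le> real k"
      by blast
    moreover have "(0::real) < 2 ^ j"
      by simp
    ultimately show "k \<in> {k. 2 ^ j / 2 < real k}"
      unfolding mem_Collect_eq by linarith
  qed
  then have "measure_pmf.prob d {k. 2 ^ j \<le> real k} \<le> tail d (2 ^ j / 2)"
    unfolding tail_def by (intro measure_pmf.finite_measure_mono) auto
  also have "\<dots> \<le> C * (2 ^ j / 2) powr (- \<kappa>)"
    using assms by simp
  also have "(2 ^ j / 2 :: real) powr (- \<kappa>) = 2 powr \<kappa> * 2 powr (- \<kappa> * real j)"
    by (simp add: powr_divide powr_realpow[symmetric] powr_powr powr_minus field_simps)
  finally show ?thesis
    by (simp add: mult.assoc)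
qed

lemma expectation_truncated_powr_le:
  fixes s \<kappa> C M :: real
  assumes tail_le: "\<forall>t>0. tail d t \<le> C * t powr (- \<kappa>)" and "C > 0"
    and s: "0 \<le> s" "s < \<kappa>" and "M \<ge> 0"
  shows "measure_pmf.expectation d (\<lambda>k. (min (real k) M + 1) powr s)
     \<le> 2 powr s + C * 2 powr (2 * s + \<kappa>) / (1 - 2 powr (s - \<kappa>))"
proof -
  let ?r = "2 powr (s - \<kappa>) :: real"
  have r: "0 < ?r" "?r < 1"
    using s by (auto intro: powr_less_one)
  obtain J :: nat where "M < 2 ^ J"
    using real_arch_pow[of 2 M] by auto
  then have "measure_pmf.expectation d (\<lambda>k. (min (real k) M + 1) powr s)
      \<le> 2 powr s + (\<Sum>j<J. 2 powr ((real j + 2) * s) * measure_pmf.prob d {k. 2 ^ j \<le> real k})"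
    using s \<open>M \<ge> 0\<close> by (intro expectation_truncated_powr_le_dyadic)
  also have "\<dots> \<le> 2 powr s
      + (\<Sum>j<J. 2 powr ((real j + 2) * s) * (C * 2 powr \<kappa> * 2 powr (- \<kappa> * real j)))"
    by (intro add_left_mono sum_mono mult_left_mono prob_ge_pow2_le[OF tail_le]) simp
  also have "\<dots> = 2 powr s + C * 2 powr (2 * s + \<kappa>) * (\<Sum>j<J. ?r ^ j)"
    by (simp add: sum_distrib_left powr_realpow[symmetric] powr_powr powr_add[symmetric]
        algebra_simps)
  also have "(\<Sum>j<J. ?r ^ j) = (1 - ?r ^ J) / (1 - ?r)"
    using r s by (simp add: sum_gp_strict)
  also have "\<dots> \<le> 1 / (1 - ?r)"
    using r by (intro divide_right_mono) auto
  finally show ?thesis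
    using \<open>C > 0\<close> by (simp add: mult_left_mono divide_right_mono)
qed

lemma map_pmf_ge_1_eq_bernoulli:
  "map_pmf (\<lambda>k. 1 \<le> k) d = bernoulli_pmf (measure_pmf.prob d {k. 1 \<le> k})"
proof (rule pmf_eqI)
  fix b :: bool
  let ?q = "measure_pmf.prob d {k. 1 \<le> k}"
  have q: "0 \<le> ?q" "?q \<le> 1" by auto
  show "pmf (map_pmf (\<lambda>k. 1 \<le> k) d) b = pmf (bernoulli_pmf ?q) b"
  proof (cases b)
    case True
    then show ?thesis using q by (simp add: pmf_map vimage_def)
  next
    case False
    have "pmf (map_pmf (\<lambda>k. 1 \<le> k) d) False = measure_pmf.prob d {k. \<not> 1 \<le> k}"
      by (simp add: pmf_map vimage_def)
    also have "\<dots> = 1 - ?q"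
    proof -
      have "{k. \<not> 1 \<le> k} = space (measure_pmf d) - {k. 1 \<le> k}" by auto
      then show ?thesis using measure_pmf.prob_compl[of "{k. 1 \<le> k}" d] by simp
    qed
    finally show ?thesis using False q by simp
  qed
qed

lemma prob_few_positive_degrees_le:
  fixes d :: "nat pmf" and n :: nat
  assumes n: "n > 0"
  defines "q \<equiv> measure_pmf.prob d {k. 1 \<le> k}"
  shows "measure_pmf.prob (iid_degrees d n) {D. real (card {i\<in>{..<n}. 1 \<le> D i}) \<le> real n * q / 2}
      \<le> exp (- real n * q^2 / 2)"
proof -
  have q01: "q \<in> {0..1}" by (auto simp: q_def)
  interpret binomial_distribution n q by unfold_locales (fact q01)
  have eq: "map_pmf (\<lambda>D. card {i\<in>{..<n}. 1 \<le> D i}) (iid_degrees d n) = binomial_pmf n q"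
  proof -
    have e0: "Pi_pmf {..<n} False (\<lambda>_. bernoulli_pmf q)
        = Pi_pmf {..<n} False (\<lambda>_. map_pmf (\<lambda>k. 1 \<le> k) d)"
      by (simp only: map_pmf_ge_1_eq_bernoulli q_def)
    have e1: "Pi_pmf {..<n} False (\<lambda>_. map_pmf (\<lambda>k. 1 \<le> k) d)
        = map_pmf (\<lambda>h. (\<lambda>k. 1 \<le> k) \<circ> h) (iid_degrees d n)"
      by (rule Pi_pmf_map) auto
    have "binomial_pmf n q
        = map_pmf (\<lambda>f. card {x\<in>{..<n}. f x}) (Pi_pmf {..<n} False (\<lambda>_. bernoulli_pmf q))"
      using binomial_pmf_altdef'[of "{..<n}" n q False] q01 by simp
    then have "binomial_pmf n q = map_pmf (\<lambda>f. card {x\<in>{..<n}. f x})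
        (map_pmf (\<lambda>h. (\<lambda>k. 1 \<le> k) \<circ> h) (iid_degrees d n))"
      unfolding e0 e1 .
    then show ?thesis by (simp add: pmf.map_comp o_def)
  qed
  have "measure_pmf.prob (iid_degrees d n) {D. real (card {i\<in>{..<n}. 1 \<le> D i}) \<le> real n * q / 2}
      = measure_pmf.prob (binomial_pmf n q) {x. real x \<le> real n * q - real n * q / 2}"
    by (simp flip: eq add: mult.commute)
  also have "\<dots> \<le> exp (- 2 * (real n * q / 2)^2 / real n)"
    by (rule prob_le[OF n]) (use q01 in auto)
  also have "- 2 * (real n * q / 2)^2 / real n = - real n * q^2 / 2"
    using n by (simp add: power2_eq_square field_simps)
  finally show ?thesis .
qed

lemma measure_bind_pmf_le:
  fixes P :: "'a pmf" and K :: "'a \<Rightarrow> 'b pmf"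
  assumes bK: "\<And>x. x \<in> G \<Longrightarrow> measure_pmf.prob (K x) S \<le> b" and b0: "0 \<le> b"
  shows "measure_pmf.prob (bind_pmf P K) S \<le> measure_pmf.prob P (- G) + b"
proof -
  have pt: "emeasure (measure_pmf (K x)) S \<le> ennreal (indicator (- G) x + b)" for x
  proof (cases "x \<in> G")
    case True
    then have "emeasure (measure_pmf (K x)) S = ennreal (measure_pmf.prob (K x) S)"
      by (simp add: measure_pmf.emeasure_eq_measure)
    also have "\<dots> \<le> ennreal (indicator (- G) x + b)"
      using bK[OF True] True by (intro ennreal_leI) simp
    finally show ?thesis .
  next
    case False
    have "emeasure (measure_pmf (K x)) S = ennreal (measure_pmf.prob (K x) S)"
      by (simp add: measure_pmf.emeasure_eq_measure)
    also have "\<dots> \<le> ennreal (indicator (- G) x + b)" using False b0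
      by (intro ennreal_leI) (auto simp: measure_pmf.prob_le_1 add_increasing2)
    finally show ?thesis .
  qed
  have "ennreal (measure_pmf.prob (bind_pmf P K) S) = emeasure (measure_pmf (bind_pmf P K)) S"
    by (simp add: measure_pmf.emeasure_eq_measure)
  also have "\<dots> = (\<integral>\<^sup>+x. emeasure (measure_pmf (K x)) S \<partial>measure_pmf P)" by simp
  also have "\<dots> \<le> (\<integral>\<^sup>+x. ennreal (indicator (- G) x + b) \<partial>measure_pmf P)"
    by (intro nn_integral_mono pt)
  also have "\<dots> = (\<integral>\<^sup>+x. ennreal (indicator (- G) x) + ennreal b \<partial>measure_pmf P)"
    using b0 by (intro nn_integral_cong) (auto simp: ennreal_plus)
  also have "\<dots> = (\<integral>\<^sup>+x. ennreal (indicator (- G) x) \<partial>measure_pmf P)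
      + (\<integral>\<^sup>+x. ennreal b \<partial>measure_pmf P)"
    by (rule nn_integral_add) auto
  also have "\<dots> = emeasure (measure_pmf P) (- G) + ennreal b"
    by (simp add: ennreal_indicator measure_pmf.emeasure_space_1)
  also have "\<dots> = ennreal (measure_pmf.prob P (- G) + b)"
    using b0 by (simp add: measure_pmf.emeasure_eq_measure ennreal_plus)
  finally have le: "ennreal (measure_pmf.prob (bind_pmf P K) S)
      \<le> ennreal (measure_pmf.prob P (- G) + b)" .
  have nn: "0 \<le> measure_pmf.prob P (- G) + b" using b0 by simp
  show ?thesis using le ennreal_le_iff[OF nn] by blast
qed

lemma prob_pmf_of_set_gt_le:
  fixes f :: "'a \<Rightarrow> real"
  assumes fin: "finite A" and ne: "A \<noteq> {}" and f0: "\<And>x. 0 \<le> f x" and c: "0 < c"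
  shows "measure_pmf.prob (pmf_of_set A) {x. c < f x} \<le> (\<Sum>x\<in>A. f x) / real (card A) / c"
proof -
  have "measure_pmf.prob (pmf_of_set A) {x. c < f x} \<le> measure_pmf.expectation (pmf_of_set A) f / c"
  proof (rule measure_pmf_Markov)
    show "integrable (measure_pmf (pmf_of_set A)) f"
      by (rule integrable_measure_pmf_finite) (use fin ne in simp)
  qed (use f0 c in auto)
  also have "measure_pmf.expectation (pmf_of_set A) f = (\<Sum>x\<in>A. f x) / real (card A)"
    using fin ne by (simp add: integral_pmf_of_set)
  finally show ?thesis .
qed

lemma prob_CM_gt_le:
  fixes F :: "(nat \<Rightarrow> nat) \<Rightarrow> (nat \<times> nat \<Rightarrow> nat \<times> nat) \<Rightarrow> real"
  assumes F0: "\<And>D m. 0 \<le> F D m" and c: "0 < c" and b0: "0 \<le> b"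
    and avg: "\<And>D. D \<in> G \<Longrightarrow> (\<Sum>m\<in>matchings (halfedges n D). F D m)
      \<le> real (card (matchings (halfedges n D))) * (b * c)"
  shows "measure_pmf.prob (CM d n) {(D, m). c < F D m}
    \<le> measure_pmf.prob (iid_degrees d n) (- G) + b"
proof -
  have CM_eq: "CM d n = bind_pmf (iid_degrees d n)
      (\<lambda>D. map_pmf (\<lambda>m. (D, m)) (pmf_of_set (matchings (halfedges n D))))"
    by (simp add: CM_def map_pmf_def)
  show ?thesis unfolding CM_eq
  proof (rule measure_bind_pmf_le[OF _ b0])
    fix D assume D: "D \<in> G"
    let ?A = "matchings (halfedges n D)"
    have fin: "finite ?A" by (simp add: finite_matchings)
    have ne: "?A \<noteq> {}" by (simp add: matchings_nonempty even_card_halfedges)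
    have cpos: "real (card ?A) > 0" using fin ne by (simp add: card_gt_0_iff)
    have "measure_pmf.prob (map_pmf (\<lambda>m. (D, m)) (pmf_of_set ?A)) {(D, m). c < F D m}
        = measure_pmf.prob (pmf_of_set ?A) {m. c < F D m}" by (simp add: vimage_def)
    also have "\<dots> \<le> (\<Sum>m\<in>?A. F D m) / real (card ?A) / c"
      by (rule prob_pmf_of_set_gt_le[OF fin ne F0 c])
    also have "\<dots> \<le> b"
      using avg[OF D] cpos c by (simp add: field_simps)
    finally show "measure_pmf.prob (map_pmf (\<lambda>m. (D, m)) (pmf_of_set ?A)) {(D, m). c < F D m} \<le> b" .
  qed
qed

lemma prob_CM_tendsto_zero:
  fixes F :: "nat \<Rightarrow> (nat \<Rightarrow> nat) \<Rightarrow> (nat \<times> nat \<Rightarrow> nat \<times> nat) \<Rightarrow> real"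
  assumes F_nonneg: "\<And>n D m. 0 \<le> F n D m"
    and not_G: "(\<lambda>n. measure_pmf.prob (iid_degrees d n) (- G n)) \<longlonglongrightarrow> 0"
    and mean: "\<forall>\<^sub>F n in sequentially. \<forall>D\<in>G n.
       (\<Sum>m\<in>matchings (halfedges n D). F n D m) \<le> real (card (matchings (halfedges n D))) * b n"
    and b: "b \<longlonglongrightarrow> 0" and "\<epsilon> > 0"
  shows "(\<lambda>n. measure_pmf.prob (CM d n) {(D, m). F n D m > \<epsilon>}) \<longlonglongrightarrow> 0"
proof (rule Lim_null_comparison)
  show "(\<lambda>n. measure_pmf.prob (iid_degrees d n) (- G n) + \<bar>b n\<bar> / \<epsilon>) \<longlonglongrightarrow> 0"
    using tendsto_add[OF not_G tendsto_divide_zero[OF tendsto_rabs_zero[OF b]]] by simp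
  show "\<forall>\<^sub>F n in sequentially.
      norm (measure_pmf.prob (CM d n) {(D, m). F n D m > \<epsilon>})
      \<le> measure_pmf.prob (iid_degrees d n) (- G n) + \<bar>b n\<bar> / \<epsilon>"
    using mean
  proof eventually_elim
    case (elim n)
    have "measure_pmf.prob (CM d n) {(D, m). \<epsilon> < F n D m}
        \<le> measure_pmf.prob (iid_degrees d n) (- G n) + \<bar>b n\<bar> / \<epsilon>"
    proof (rule prob_CM_gt_le[OF F_nonneg \<open>\<epsilon> > 0\<close>])
      fix D
      assume "D \<in> G n"
      with elim have "(\<Sum>m\<in>matchings (halfedges n D). F n D m)
          \<le> real (card (matchings (halfedges n D))) * b n"
        by blast
      also have "\<dots> \<le> real (card (matchings (halfedges n D))) * (\<bar>b n\<bar> / \<epsilon> * \<epsilon>)"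
        using \<open>\<epsilon> > 0\<close> by (intro mult_left_mono) auto
      finally show "(\<Sum>m\<in>matchings (halfedges n D). F n D m)
          \<le> real (card (matchings (halfedges n D))) * (\<bar>b n\<bar> / \<epsilon> * \<epsilon>)" .
    qed (use \<open>\<epsilon> > 0\<close> in simp)
    then show ?case
      by simp
  qed
qed

definition good_degrees :: "real \<Rightarrow> real \<Rightarrow> real \<Rightarrow> real \<Rightarrow> nat \<Rightarrow> (nat \<Rightarrow> nat) set" where
  "good_degrees q s M W n = {D. (\<forall>i<n. real (D i) \<le> M) \<and> (\<Sum>i<n. (real (D i) + 1) powr s) \<le> W
      \<and> real n * q / 2 < real (card {i\<in>{..<n}. 1 \<le> D i})}"

lemma halfedges_bounds_of_good_degrees:
  assumes D: "D \<in> good_degrees q s M W n" and n: "real n * q \<ge> 10"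
  shows "card (halfedges n D) \<ge> 5" "real n * q / 4 \<le> real (card (halfedges n D)) - 1"
proof -
  have "card {i\<in>{..<n}. 1 \<le> D i} = (\<Sum>i\<in>{i\<in>{..<n}. 1 \<le> D i}. 1)"
    by simp
  also have "\<dots> \<le> (\<Sum>i\<in>{i\<in>{..<n}. 1 \<le> D i}. D i)"
    by (intro sum_mono) auto
  also have "\<dots> \<le> (\<Sum>i<n. D i)"
    by (intro sum_mono2) auto
  also have "\<dots> \<le> card (halfedges n D)"
    by (rule sum_le_card_halfedges)
  finally have "real n * q / 2 < real (card (halfedges n D))"
    using D by (simp add: good_degrees_def)
  then show "card (halfedges n D) \<ge> 5" "real n * q / 4 \<le> real (card (halfedges n D)) - 1"
    using n by auto
qed

lemma prob_not_good_degrees_le: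
  fixes d :: "nat pmf"
  assumes n: "n > 0" and "0 < M" "0 < W" "0 \<le> s"
  defines "q \<equiv> measure_pmf.prob d {k. 1 \<le> k}"
  shows "measure_pmf.prob (iid_degrees d n) (- good_degrees q s M W n)
    \<le> real n * tail d M + real n * measure_pmf.expectation d (\<lambda>k. (min (real k) M + 1) powr s) / W
       + exp (- real n * q\<^sup>2 / 2)"
proof -
  let ?P = "measure_pmf.prob (iid_degrees d n)"
  let ?A1 = "{D. \<exists>i<n. M < real (D i)}"
  let ?A2 = "{D. W < (\<Sum>i<n. (min (real (D i)) M + 1) powr s)}"
  let ?A3 = "{D. real (card {i\<in>{..<n}. 1 \<le> D i}) \<le> real n * q / 2}"
  have "- good_degrees q s M W n \<subseteq> ?A1 \<union> ?A2 \<union> ?A3"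
  proof
    fix D
    assume D: "D \<in> - good_degrees q s M W n"
    show "D \<in> ?A1 \<union> ?A2 \<union> ?A3"
    proof (cases "D \<in> ?A1")
      case False
      have "real (D i) \<le> M" if "i < n" for i
      proof (rule ccontr)
        assume "\<not> real (D i) \<le> M"
        with that have "D \<in> ?A1"
          by auto
        with False show False
          by contradiction
      qed
      then have "(\<Sum>i<n. (min (real (D i)) M + 1) powr s) = (\<Sum>i<n. (real (D i) + 1) powr s)"
        by (intro sum.cong refl) (simp add: min_absorb1)
      then show ?thesis
        using D False by (auto simp: good_degrees_def not_le not_less)
    qed simp
  qed
  then have "?P (- good_degrees q s M W n) \<le> ?P (?A1 \<union> ?A2 \<union> ?A3)"
    by (intro measure_pmf.finite_measure_mono) auto
  also have "\<dots> \<le> ?P (?A1 \<union> ?A2) + ?P ?A3"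
    by (rule measure_Un_le) auto
  also have "\<dots> \<le> ?P ?A1 + ?P ?A2 + ?P ?A3"
    using measure_Un_le[of ?A1 "measure_pmf (iid_degrees d n)" ?A2] by simp
  also have "\<dots> \<le> real n * tail d M
      + real n * measure_pmf.expectation d (\<lambda>k. (min (real k) M + 1) powr s) / W
      + exp (- real n * q\<^sup>2 / 2)"
  proof (intro add_mono)
    show "?P ?A1 \<le> real n * tail d M"
      by (rule prob_exists_degree_gt_le)
    show "?P ?A2 \<le> real n * measure_pmf.expectation d (\<lambda>k. (min (real k) M + 1) powr s) / W"
      by (rule prob_sum_gt_le[where B = "(M + 1) powr s"])
        (use assms in \<open>auto intro!: powr_mono2\<close>)
    show "?P ?A3 \<le> exp (- real n * q\<^sup>2 / 2)"
      using prob_few_positive_degrees_le[OF n, of d] by (simp add: q_def)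
  qed
  finally show ?thesis .
qed

lemma tendsto_mult_real_powr_neg: "a < 0 \<Longrightarrow> (\<lambda>n::nat. c * real n powr a) \<longlonglongrightarrow> 0"
  using tendsto_mult_right_zero[OF tendsto_neg_powr[OF _ filterlim_real_sequentially]] by auto

lemma eventually_real_mult_ge:
  assumes "q > 0"
  shows "\<forall>\<^sub>F n in sequentially. c \<le> real n * q"
proof -
  obtain N :: nat where "c / q < real N"
    using reals_Archimedean2 by blast
  then have "c \<le> real n * q" if "n \<ge> N" for n
    using that assms by (auto simp: field_simps intro: order_trans[of _ "real N * q"])
  then show ?thesis
    by (auto simp: eventually_sequentially)
qed

lemma powr_plus_one_bounds:
  fixes x e :: real
  assumes x: "x \<ge> 1" and e: "e > 0"
  shows "(x powr e + 1) ^ k \<le> 2 ^ k * x powr (e * real k)"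
    and "t \<ge> 0 \<Longrightarrow> (x powr e + 1) powr t \<le> 2 powr t * x powr (e * t)"
proof -
  have "x powr e \<ge> 1"
    using x e by (simp add: ge_one_powr_ge_zero)
  then have le_double: "x powr e + 1 \<le> 2 * x powr e"
    by simp
  have "(x powr e + 1) ^ k \<le> (2 * x powr e) ^ k"
    using le_double by (intro power_mono) auto
  also have "\<dots> = 2 ^ k * x powr (e * real k)"
    using x by (simp add: power_mult_distrib powr_powr[symmetric] powr_realpow)
  finally show "(x powr e + 1) ^ k \<le> 2 ^ k * x powr (e * real k)" .
  assume "t \<ge> 0"
  then have "(x powr e + 1) powr t \<le> (2 * x powr e) powr t"
    using le_double by (intro powr_mono2) auto
  also have "\<dots> = 2 powr t * x powr (e * t)"
    by (simp add: powr_mult powr_powr)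
  finally show "(x powr e + 1) powr t \<le> 2 powr t * x powr (e * t)" .
qed

lemma powr_square_div_powr:
  fixes x q \<eta> s :: real
  assumes "x > 0" "q > 0"
  shows "(x powr (1 + \<eta>))\<^sup>2 / (x * q / 4) powr s = (4 / q) powr s * x powr (2 + 2 * \<eta> - s)"
proof -
  have "(x powr (1 + \<eta>))\<^sup>2 = x powr (2 + 2 * \<eta>)"
    using assms by (simp add: power2_eq_square powr_add[symmetric])
  moreover have "(x * q / 4) powr s = x powr s * (q / 4) powr s"
    using assms by (simp add: powr_mult[symmetric])
  moreover have "(4 / q) powr s = 1 / (q / 4) powr s"
    using assms by (simp add: powr_divide)
  ultimately show ?thesis
    using assms by (simp add: powr_diff field_simps)
qed

lemma Ye_bound_le_powr:
  fixes x e \<eta> q s T :: real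
  assumes x: "x \<ge> 1" and e: "e > 0" and q: "q > 0" and s: "1 \<le> s" "s \<le> 2"
  shows "((x powr e + 1) ^ p * (x powr e + 1) powr (2 - s) * x powr (1 + \<eta>) / (x * q / 4)
          + (x powr e + 1) ^ p * (x powr (1 + \<eta>))\<^sup>2 / (x * q / 4) powr s) / x powr T
     \<le> (2 ^ p * 2 powr (2 - s) * (4 / q)) * x powr (e * real p + e * (2 - s) + \<eta> - T)
       + (2 ^ p * (4 / q) powr s) * x powr (e * real p + 2 + 2 * \<eta> - s - T)"
proof -
  have x_pos: "x > 0"
    using x by simp
  have first: "(x powr e + 1) ^ p * (x powr e + 1) powr (2 - s) * x powr (1 + \<eta>) / (x * q / 4)
      \<le> (2 ^ p * x powr (e * real p)) * (2 powr (2 - s) * x powr (e * (2 - s)))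
        * ((4 / q) * x powr \<eta>)"
  proof -
    have "x powr (1 + \<eta>) / (x * q / 4) = (4 / q) * x powr \<eta>"
      using x_pos q by (simp add: powr_add field_simps)
    then have "(x powr e + 1) ^ p * (x powr e + 1) powr (2 - s) * x powr (1 + \<eta>) / (x * q / 4)
        = (x powr e + 1) ^ p * (x powr e + 1) powr (2 - s) * ((4 / q) * x powr \<eta>)"
      by (simp only: times_divide_eq_right[symmetric])
    also have "\<dots> \<le> (2 ^ p * x powr (e * real p)) * (2 powr (2 - s) * x powr (e * (2 - s)))
        * ((4 / q) * x powr \<eta>)"
      using q s by (intro mult_right_mono mult_mono powr_plus_one_bounds[OF x e]) auto
    finally show ?thesis .
  qed
  have second: "(x powr e + 1) ^ p * (x powr (1 + \<eta>))\<^sup>2 / (x * q / 4) powr s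
      \<le> (2 ^ p * x powr (e * real p)) * ((4 / q) powr s * x powr (2 + 2 * \<eta> - s))"
  proof -
    have "(x powr e + 1) ^ p * (x powr (1 + \<eta>))\<^sup>2 / (x * q / 4) powr s
        = (x powr e + 1) ^ p * ((4 / q) powr s * x powr (2 + 2 * \<eta> - s))"
      by (simp only: powr_square_div_powr[OF x_pos q, symmetric] times_divide_eq_right)
    also have "\<dots> \<le> (2 ^ p * x powr (e * real p)) * ((4 / q) powr s * x powr (2 + 2 * \<eta> - s))"
      by (intro mult_right_mono powr_plus_one_bounds[OF x e]) auto
    finally show ?thesis .
  qed
  have "((x powr e + 1) ^ p * (x powr e + 1) powr (2 - s) * x powr (1 + \<eta>) / (x * q / 4)
          + (x powr e + 1) ^ p * (x powr (1 + \<eta>))\<^sup>2 / (x * q / 4) powr s) / x powr T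
     \<le> ((2 ^ p * x powr (e * real p)) * (2 powr (2 - s) * x powr (e * (2 - s)))
           * ((4 / q) * x powr \<eta>)
         + (2 ^ p * x powr (e * real p)) * ((4 / q) powr s * x powr (2 + 2 * \<eta> - s))) / x powr T"
    using x_pos by (intro divide_right_mono add_mono first second) auto
  also have "\<dots> = (2 ^ p * 2 powr (2 - s) * (4 / q)) * x powr (e * real p + e * (2 - s) + \<eta> - T)
       + (2 ^ p * (4 / q) powr s) * x powr (e * real p + 2 + 2 * \<eta> - s - T)"
    using x_pos by (simp add: powr_add powr_diff field_simps)
  finally show ?thesis .
qed

lemma Ze_bound_le_powr:
  fixes x e \<eta> q s T :: real
  assumes x: "x \<ge> 1" and e: "e > 0" and q: "q > 0"
  shows "(x powr e + 1)\<^sup>2 * (x powr (1 + \<eta>))\<^sup>2 / (x * q / 4) powr s / x powr T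
     \<le> (4 * (4 / q) powr s) * x powr (2 * e + 2 + 2 * \<eta> - s - T)"
proof -
  have x_pos: "x > 0"
    using x by simp
  have "(x powr e + 1)\<^sup>2 * (x powr (1 + \<eta>))\<^sup>2 / (x * q / 4) powr s / x powr T
      = (x powr e + 1) ^ 2 * ((4 / q) powr s * x powr (2 + 2 * \<eta> - s)) / x powr T"
    by (simp only: powr_square_div_powr[OF x_pos q, symmetric] times_divide_eq_right)
  also have "\<dots> \<le> (2 ^ 2 * x powr (e * real 2)) * ((4 / q) powr s * x powr (2 + 2 * \<eta> - s))
      / x powr T"
    using x_pos by (intro divide_right_mono mult_right_mono powr_plus_one_bounds(1)[OF x e]) auto
  also have "\<dots> = (4 * (4 / q) powr s) * x powr (2 * e + 2 + 2 * \<eta> - s - T)"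
    using x_pos by (simp add: powr_add powr_diff field_simps)
  finally show ?thesis .
qed

lemma tail_exponent_neg:
  fixes \<gamma> \<eta> :: real
  assumes "1 < \<gamma>" "\<gamma> < 2" "0 < \<eta>" "\<eta> \<le> (\<gamma> - 1) / 2"
  shows "1 - (1 / \<gamma> + \<eta>) * (\<gamma> - \<eta> / 2) < 0"
proof -
  have "1 - (1 / \<gamma> + \<eta>) * (\<gamma> - \<eta> / 2) = \<eta> * ((1 / \<gamma>) / 2 - \<gamma> + \<eta> / 2)"
    using assms by (simp add: field_simps)
  also have "\<dots> < 0"
  proof (intro mult_pos_neg)
    define g where "g = 1 / \<gamma>"
    have "g < 1"
      using assms by (simp add: g_def)
    then show "(1 / \<gamma>) / 2 - \<gamma> + \<eta> / 2 < 0"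
      unfolding g_def[symmetric] using assms by (simp add: field_simps)
  qed (use assms in simp)
  finally show ?thesis .
qed

lemma Ye_exponents_neg:
  fixes \<gamma> \<delta> \<eta> :: real and p :: nat
  assumes "1 < \<gamma>" "\<gamma> < 2" "0 < \<delta>" "0 < \<eta>" "\<eta> \<le> (\<gamma> - 1) / 2"
    and \<eta>_le: "\<eta> * (real p + 6) \<le> \<delta> / 2"
  defines "e \<equiv> 1 / \<gamma> + \<eta>" and "s \<equiv> \<gamma> - \<eta>" and "T \<equiv> real p / \<gamma> + 2 - \<gamma> + \<delta>"
  shows "e * real p + e * (2 - s) + \<eta> - T < 0" "e * real p + 2 + 2 * \<eta> - s - T < 0"
proof -
  have "e * real p + e * (2 - s) + \<eta> - T
      = (2 - \<gamma>) * (1 / \<gamma> - 1) + \<eta> * (real p + 3 - \<gamma> + 1 / \<gamma> + \<eta>) - \<delta>"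
    using assms(1) by (simp add: e_def s_def T_def field_simps)
  moreover have "(2 - \<gamma>) * (1 / \<gamma> - 1) < 0"
    using assms(1,2) by (intro mult_pos_neg) auto
  moreover have "\<eta> * (real p + 3 - \<gamma> + 1 / \<gamma> + \<eta>) \<le> \<eta> * (real p + 6)"
  proof (intro mult_left_mono)
    define g where "g = 1 / \<gamma>"
    have "g < 1"
      using assms(1) by (simp add: g_def)
    then show "real p + 3 - \<gamma> + 1 / \<gamma> + \<eta> \<le> real p + 6"
      unfolding g_def[symmetric] using assms(1,2,5) by (simp add: field_simps)
  qed (use assms(4) in simp)
  ultimately show "e * real p + e * (2 - s) + \<eta> - T < 0"
    using \<eta>_le assms(3) by linarith
  have "e * real p + 2 + 2 * \<eta> - s - T = \<eta> * (real p + 3) - \<delta>"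
    by (simp add: e_def s_def T_def algebra_simps)
  moreover have "\<eta> * (real p + 3) \<le> \<eta> * (real p + 6)"
    using assms(4) by (intro mult_left_mono) auto
  ultimately show "e * real p + 2 + 2 * \<eta> - s - T < 0"
    using \<eta>_le assms(3) by linarith
qed

lemma Ze_exponent_neg:
  fixes \<gamma> \<delta> \<eta> :: real
  assumes "0 < \<delta>" "5 * \<eta> < \<delta>"
  shows "2 * (1 / \<gamma> + \<eta>) + 2 + 2 * \<eta> - (\<gamma> - \<eta>) - (2 / \<gamma> + 2 - \<gamma> + \<delta>) < 0"
  using assms by (simp add: algebra_simps)

lemma Ye_bound_tendsto_zero:
  fixes e \<eta> q s T :: real
  assumes e: "e > 0" and q: "q > 0" and s: "1 \<le> s" "s \<le> 2"
    and exps: "e * real p + e * (2 - s) + \<eta> - T < 0" "e * real p + 2 + 2 * \<eta> - s - T < 0"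
  shows "(\<lambda>n. ((real n powr e + 1) ^ p * (real n powr e + 1) powr (2 - s) * real n powr (1 + \<eta>)
               / (real n * q / 4)
            + (real n powr e + 1) ^ p * (real n powr (1 + \<eta>))\<^sup>2 / (real n * q / 4) powr s)
          / real n powr T) \<longlonglongrightarrow> 0"
proof (rule Lim_null_comparison)
  show "(\<lambda>n. (2 ^ p * 2 powr (2 - s) * (4 / q)) * real n powr (e * real p + e * (2 - s) + \<eta> - T)
       + (2 ^ p * (4 / q) powr s) * real n powr (e * real p + 2 + 2 * \<eta> - s - T)) \<longlonglongrightarrow> 0"
    by (intro tendsto_add_zero tendsto_mult_real_powr_neg exps)
  show "\<forall>\<^sub>F n in sequentially. norm (((real n powr e + 1) ^ p * (real n powr e + 1) powr (2 - s)
         * real n powr (1 + \<eta>) / (real n * q / 4)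
       + (real n powr e + 1) ^ p * (real n powr (1 + \<eta>))\<^sup>2 / (real n * q / 4) powr s)
       / real n powr T)
     \<le> (2 ^ p * 2 powr (2 - s) * (4 / q)) * real n powr (e * real p + e * (2 - s) + \<eta> - T)
       + (2 ^ p * (4 / q) powr s) * real n powr (e * real p + 2 + 2 * \<eta> - s - T)"
    using eventually_ge_at_top[of 1]
  proof eventually_elim
    case (elim n)
    then show ?case
      using Ye_bound_le_powr[of "real n" e q s p \<eta> T] e q s
      by (subst real_norm_def, subst abs_of_nonneg) (auto intro!: divide_nonneg_nonneg)
  qed
qed

lemma Ze_bound_tendsto_zero:
  fixes e \<eta> q s T :: real
  assumes e: "e > 0" and q: "q > 0" and exp: "2 * e + 2 + 2 * \<eta> - s - T < 0"
  shows "(\<lambda>n. (real n powr e + 1)\<^sup>2 * (real n powr (1 + \<eta>))\<^sup>2 / (real n * q / 4) powr s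
              / real n powr T) \<longlonglongrightarrow> 0"
proof (rule Lim_null_comparison)
  show "(\<lambda>n. (4 * (4 / q) powr s) * real n powr (2 * e + 2 + 2 * \<eta> - s - T)) \<longlonglongrightarrow> 0"
    using tendsto_mult_real_powr_neg[OF exp] .
  show "\<forall>\<^sub>F n in sequentially.
      norm ((real n powr e + 1)\<^sup>2 * (real n powr (1 + \<eta>))\<^sup>2 / (real n * q / 4) powr s
        / real n powr T)
      \<le> (4 * (4 / q) powr s) * real n powr (2 * e + 2 + 2 * \<eta> - s - T)"
    using eventually_ge_at_top[of 1]
  proof eventually_elim
    case (elim n)
    then show ?case
      using Ze_bound_le_powr[of "real n" e q \<eta> s T] e q by simp
  qed
qed

lemma sum_abs_divide_le:
  fixes X :: "'a \<Rightarrow> real"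
  assumes "\<And>m. m \<in> A \<Longrightarrow> 0 \<le> X m" and "(\<Sum>m\<in>A. X m) \<le> c * B" and "t > 0"
  shows "(\<Sum>m\<in>A. \<bar>X m / t\<bar>) \<le> c * (B / t)"
proof -
  have "(\<Sum>m\<in>A. \<bar>X m / t\<bar>) = (\<Sum>m\<in>A. X m) / t"
    using assms(1,3) by (simp add: sum_divide_distrib)
  also have "\<dots> \<le> c * B / t"
    using assms(2,3) by (intro divide_right_mono) auto
  finally show ?thesis
    by simp
qed

lemma exp_neg_half_le_powr:
  fixes x c :: real
  assumes "x > 0" "c > 0"
  shows "exp (- x * c / 2) \<le> (2 / c) * x powr (- 1)"
proof -
  have "x * c / 2 \<le> exp (x * c / 2)"
    using exp_ge_add_one_self[of "x * c / 2"] by linarith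
  then have "exp (- x * c / 2) \<le> 1 / (x * c / 2)"
    using assms by (simp add: exp_minus field_simps)
  also have "\<dots> = (2 / c) * x powr (- 1)"
    using assms by (simp add: powr_minus_divide)
  finally show ?thesis .
qed

lemma real_mult_powr_powr_neg:
  "x > 0 \<Longrightarrow> x * (C * (x powr e) powr (- \<kappa>)) = C * x powr (1 - e * \<kappa>)"
  for x :: real
  by (simp add: powr_powr powr_diff powr_minus_divide)

lemma real_mult_divide_powr:
  "x > 0 \<Longrightarrow> x * K / x powr (1 + \<eta>) = K * x powr (- \<eta>)"
  for x :: real
  by (simp add: powr_add powr_minus_divide)

locale regularly_varying_degrees =
  fixes d :: "nat pmf" and \<gamma> :: real and L :: "real \<Rightarrow> real"
  assumes gamma_bounds: "1 < \<gamma>" "\<gamma> < 2"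
    and slowly_varying_L: "slowly_varying L"
    and tail_eq: "\<forall>t>0. tail d t = L t * t powr (- \<gamma>)"
begin

definition q :: real where
  "q = measure_pmf.prob d {k. 1 \<le> k}"

lemma q_pos: "q > 0"
  unfolding q_def by (rule prob_positive_degree_pos[OF slowly_varying_L tail_eq])

abbreviation good :: "real \<Rightarrow> nat \<Rightarrow> (nat \<Rightarrow> nat) set" where
  "good \<eta> n \<equiv> good_degrees q (\<gamma> - \<eta>) (real n powr (1 / \<gamma> + \<eta>)) (real n powr (1 + \<eta>)) n"

lemma prob_not_good_le_powr:
  assumes \<eta>: "0 < \<eta>" "\<eta> \<le> (\<gamma> - 1) / 2"
  obtains C K where "\<And>n. n > 0 \<Longrightarrow> measure_pmf.prob (iid_degrees d n) (- good \<eta> n)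
    \<le> C * real n powr (1 - (1 / \<gamma> + \<eta>) * (\<gamma> - \<eta> / 2)) + K * real n powr (- \<eta>)
       + (2 / q\<^sup>2) * real n powr (- 1)"
proof -
  define s e \<kappa> where "s = \<gamma> - \<eta>" and "e = 1 / \<gamma> + \<eta>" and "\<kappa> = \<gamma> - \<eta> / 2"
  have s: "0 \<le> s" "s < \<kappa>"
    using \<eta> gamma_bounds by (auto simp: s_def \<kappa>_def)
  obtain C where C: "C > 0" "\<forall>t>0. tail d t \<le> C * t powr (- \<kappa>)"
    using tail_le_powr[OF slowly_varying_L tail_eq, of "\<eta> / 2"] \<eta> gamma_bounds by (auto simp: \<kappa>_def)
  define K where "K = 2 powr s + C * 2 powr (2 * s + \<kappa>) / (1 - 2 powr (s - \<kappa>))"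
  have moment: "measure_pmf.expectation d (\<lambda>k. (min (real k) M + 1) powr s) \<le> K" if "M \<ge> 0" for M
    using expectation_truncated_powr_le[OF C(2,1) s that] by (simp add: K_def)
  have bound: "measure_pmf.prob (iid_degrees d n) (- good \<eta> n)
      \<le> C * real n powr (1 - e * \<kappa>) + K * real n powr (- \<eta>) + (2 / q\<^sup>2) * real n powr (- 1)"
    if "n > 0" for n
  proof -
    have n: "real n > 0"
      using that by simp
    have "measure_pmf.prob (iid_degrees d n) (- good \<eta> n)
        \<le> real n * tail d (real n powr e)
          + real n * measure_pmf.expectation d (\<lambda>k. (min (real k) (real n powr e) + 1) powr s)
            / real n powr (1 + \<eta>)
          + exp (- real n * q\<^sup>2 / 2)"
      using prob_not_good_degrees_le[OF that, of "real n powr e" "real n powr (1 + \<eta>)" s d,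
          folded q_def] n s
      by (simp add: s_def e_def)
    also have "\<dots> \<le> real n * (C * (real n powr e) powr (- \<kappa>)) + real n * K / real n powr (1 + \<eta>)
        + (2 / q\<^sup>2) * real n powr (- 1)"
    proof (intro add_mono)
      show "real n * tail d (real n powr e) \<le> real n * (C * (real n powr e) powr (- \<kappa>))"
        using C(2) n by (intro mult_left_mono) simp_all
      show "real n * measure_pmf.expectation d (\<lambda>k. (min (real k) (real n powr e) + 1) powr s)
          / real n powr (1 + \<eta>) \<le> real n * K / real n powr (1 + \<eta>)"
        using moment[of "real n powr e"] by (intro divide_right_mono mult_left_mono) simp_all
      show "exp (- real n * q\<^sup>2 / 2) \<le> (2 / q\<^sup>2) * real n powr (- 1)"
        by (rule exp_neg_half_le_powr) (use n q_pos in auto)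
    qed
    also have "\<dots> = C * real n powr (1 - e * \<kappa>) + K * real n powr (- \<eta>)
        + (2 / q\<^sup>2) * real n powr (- 1)"
      using n by (simp add: real_mult_powr_powr_neg real_mult_divide_powr)
    finally show ?thesis .
  qed
  show ?thesis
    using bound unfolding e_def \<kappa>_def by (rule that)
qed

lemma prob_not_good_tendsto_zero:
  assumes \<eta>: "0 < \<eta>" "\<eta> \<le> (\<gamma> - 1) / 2"
  shows "(\<lambda>n. measure_pmf.prob (iid_degrees d n) (- good \<eta> n)) \<longlonglongrightarrow> 0"
proof -
  let ?a = "1 - (1 / \<gamma> + \<eta>) * (\<gamma> - \<eta> / 2)"
  obtain C K where bound: "\<And>n. n > 0 \<Longrightarrow> measure_pmf.prob (iid_degrees d n) (- good \<eta> n)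
      \<le> C * real n powr ?a + K * real n powr (- \<eta>) + (2 / q\<^sup>2) * real n powr (- 1)"
    using prob_not_good_le_powr[OF \<eta>] by blast
  show ?thesis
  proof (rule Lim_null_comparison)
    show "(\<lambda>n. C * real n powr ?a + K * real n powr (- \<eta>) + (2 / q\<^sup>2) * real n powr (- 1)) \<longlonglongrightarrow> 0"
      using tail_exponent_neg[OF gamma_bounds \<eta>] \<eta>
      by (intro tendsto_add_zero tendsto_mult_real_powr_neg) auto
    show "\<forall>\<^sub>F n in sequentially. norm (measure_pmf.prob (iid_degrees d n) (- good \<eta> n))
        \<le> C * real n powr ?a + K * real n powr (- \<eta>) + (2 / q\<^sup>2) * real n powr (- 1)"
      using eventually_gt_at_top[of 0]
      by eventually_elim (simp only: real_norm_def abs_of_nonneg measure_nonneg bound)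
  qed
qed

lemma degree_bounds_of_good:
  assumes "D \<in> good \<eta> n"
  shows "\<And>i. i < n \<Longrightarrow> real (D i) \<le> real n powr (1 / \<gamma> + \<eta>)"
    and "(\<Sum>i<n. (real (D i) + 1) powr (\<gamma> - \<eta>)) \<le> real n powr (1 + \<eta>)"
  using assms by (auto simp: good_degrees_def)

lemma weighted_Ye_tendsto_zero:
  assumes "\<delta> > 0" "\<epsilon> > 0"
  shows "(\<lambda>n. measure_pmf.prob (CM d n)
            {(D, m). \<bar>(\<Sum>i<n. real (D i) ^ p * real (Ye n D m i))
                     / real n powr (real p / \<gamma> + 2 - \<gamma> + \<delta>)\<bar> > \<epsilon>}) \<longlonglongrightarrow> 0"
proof -
  define \<eta> where "\<eta> = min ((\<gamma> - 1) / 2) (\<delta> / (2 * (real p + 6)))"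
  let ?s = "\<gamma> - \<eta>" and ?e = "1 / \<gamma> + \<eta>" and ?T = "real p / \<gamma> + 2 - \<gamma> + \<delta>"
  have \<eta>_le: "\<eta> \<le> (\<gamma> - 1) / 2" "\<eta> \<le> \<delta> / (2 * (real p + 6))"
    unfolding \<eta>_def by (rule min.cobounded1, rule min.cobounded2)
  then have \<eta>_le': "\<eta> * (real p + 6) \<le> \<delta> / 2"
    by (simp add: pos_le_divide_eq field_simps)
  have \<eta>_pos: "0 < \<eta>"
    using gamma_bounds \<open>\<delta> > 0\<close> by (simp add: \<eta>_def)
  have s_bounds: "1 \<le> ?s" "?s \<le> 2" and e_pos: "?e > 0"
    using \<eta>_pos \<eta>_le gamma_bounds by (auto intro: add_pos_pos)
  define B where "B n = (real n powr ?e + 1) ^ p * (real n powr ?e + 1) powr (2 - ?s)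
      * real n powr (1 + \<eta>) / (real n * q / 4)
      + (real n powr ?e + 1) ^ p * (real n powr (1 + \<eta>))\<^sup>2 / (real n * q / 4) powr ?s"
    for n :: nat
  show ?thesis
  proof (rule prob_CM_tendsto_zero[where G = "good \<eta>" and b = "\<lambda>n. B n / real n powr ?T"])
    show "(\<lambda>n. measure_pmf.prob (iid_degrees d n) (- good \<eta> n)) \<longlonglongrightarrow> 0"
      using prob_not_good_tendsto_zero[OF \<eta>_pos \<eta>_le(1)] .
    show "(\<lambda>n. B n / real n powr ?T) \<longlonglongrightarrow> 0"
      unfolding B_def
      using Ye_exponents_neg[OF gamma_bounds \<open>\<delta> > 0\<close> \<eta>_pos \<eta>_le(1) \<eta>_le'] q_pos s_bounds e_pos
      by (intro Ye_bound_tendsto_zero) auto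
    show "\<forall>\<^sub>F n in sequentially. \<forall>D\<in>good \<eta> n.
        (\<Sum>m\<in>matchings (halfedges n D).
           \<bar>(\<Sum>i<n. real (D i) ^ p * real (Ye n D m i)) / real n powr ?T\<bar>)
        \<le> real (card (matchings (halfedges n D))) * (B n / real n powr ?T)"
      using eventually_real_mult_ge[OF q_pos, of 10] eventually_gt_at_top[of 0]
    proof eventually_elim
      case (elim n)
      show ?case
      proof
        fix D
        assume D: "D \<in> good \<eta> n"
        note N = halfedges_bounds_of_good_degrees[OF D elim(1)]
        have "(\<Sum>m\<in>matchings (halfedges n D). \<Sum>i<n. real (D i) ^ p * real (Ye n D m i))
            \<le> real (card (matchings (halfedges n D))) * B n"
          unfolding B_def
          by (rule order_trans[OF sum_matchings_weighted_Ye_le[OF N(1) s_bounds] mult_left_mono],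
              rule weighted_Ye_bound_le)
            (use degree_bounds_of_good[OF D] N(2) elim q_pos s_bounds in simp_all)
        then show "(\<Sum>m\<in>matchings (halfedges n D).
            \<bar>(\<Sum>i<n. real (D i) ^ p * real (Ye n D m i)) / real n powr ?T\<bar>)
          \<le> real (card (matchings (halfedges n D))) * (B n / real n powr ?T)"
          using elim by (intro sum_abs_divide_le sum_nonneg mult_nonneg_nonneg) auto
      qed
    qed
  qed (use \<open>\<epsilon> > 0\<close> in simp_all)
qed

lemma weighted_Ze_tendsto_zero:
  assumes "\<delta> > 0" "\<epsilon> > 0"
  shows "(\<lambda>n. measure_pmf.prob (CM d n)
            {(D, m). \<bar>(\<Sum>j<n. \<Sum>i<j. real (Ze n D m i j) * real (D i) * real (D j))
                     / real n powr (2 / \<gamma> + 2 - \<gamma> + \<delta>)\<bar> > \<epsilon>}) \<longlonglongrightarrow> 0"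
proof -
  define \<eta> where "\<eta> = min ((\<gamma> - 1) / 2) (\<delta> / 6)"
  let ?s = "\<gamma> - \<eta>" and ?e = "1 / \<gamma> + \<eta>" and ?T = "2 / \<gamma> + 2 - \<gamma> + \<delta>"
  have \<eta>_le: "\<eta> \<le> (\<gamma> - 1) / 2" "\<eta> \<le> \<delta> / 6"
    unfolding \<eta>_def by (rule min.cobounded1, rule min.cobounded2)
  have \<eta>_pos: "0 < \<eta>"
    using gamma_bounds \<open>\<delta> > 0\<close> by (simp add: \<eta>_def)
  have s_bounds: "1 \<le> ?s" "?s \<le> 2" and e_pos: "?e > 0"
    using \<eta>_pos \<eta>_le gamma_bounds by (auto intro: add_pos_pos)
  define B where "B n = (real n powr ?e + 1)\<^sup>2 * (real n powr (1 + \<eta>))\<^sup>2 / (real n * q / 4) powr ?s"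
    for n :: nat
  show ?thesis
  proof (rule prob_CM_tendsto_zero[where G = "good \<eta>" and b = "\<lambda>n. B n / real n powr ?T"])
    show "(\<lambda>n. measure_pmf.prob (iid_degrees d n) (- good \<eta> n)) \<longlonglongrightarrow> 0"
      using prob_not_good_tendsto_zero[OF \<eta>_pos \<eta>_le(1)] .
    have "5 * \<eta> < \<delta>"
      using \<eta>_le(2) \<open>\<delta> > 0\<close> by linarith
    then show "(\<lambda>n. B n / real n powr ?T) \<longlonglongrightarrow> 0"
      unfolding B_def using Ze_exponent_neg[OF \<open>\<delta> > 0\<close>, of \<eta> \<gamma>] q_pos e_pos
      by (intro Ze_bound_tendsto_zero) auto
    show "\<forall>\<^sub>F n in sequentially. \<forall>D\<in>good \<eta> n.
        (\<Sum>m\<in>matchings (halfedges n D).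
           \<bar>(\<Sum>j<n. \<Sum>i<j. real (Ze n D m i j) * real (D i) * real (D j)) / real n powr ?T\<bar>)
        \<le> real (card (matchings (halfedges n D))) * (B n / real n powr ?T)"
      using eventually_real_mult_ge[OF q_pos, of 10] eventually_gt_at_top[of 0]
    proof eventually_elim
      case (elim n)
      show ?case
      proof
        fix D
        assume D: "D \<in> good \<eta> n"
        note N = halfedges_bounds_of_good_degrees[OF D elim(1)]
        have "(\<Sum>m\<in>matchings (halfedges n D).
              \<Sum>j<n. \<Sum>i<j. real (Ze n D m i j) * real (D i) * real (D j))
            \<le> real (card (matchings (halfedges n D))) * B n"
          unfolding B_def
          by (rule order_trans[OF sum_matchings_weighted_Ze_le[OF N(1) s_bounds] mult_left_mono],
              rule weighted_Ze_bound_le)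
            (use degree_bounds_of_good[OF D] N(2) elim q_pos s_bounds in simp_all)
        then show "(\<Sum>m\<in>matchings (halfedges n D).
            \<bar>(\<Sum>j<n. \<Sum>i<j. real (Ze n D m i j) * real (D i) * real (D j)) / real n powr ?T\<bar>)
          \<le> real (card (matchings (halfedges n D))) * (B n / real n powr ?T)"
          using elim by (intro sum_abs_divide_le sum_nonneg mult_nonneg_nonneg) auto
      qed
    qed
  qed (use \<open>\<epsilon> > 0\<close> in simp_all)
qed

end

theorem corollary2p2:
  fixes d :: "nat pmf" and \<gamma> :: real and p :: nat and \<delta> :: real
  assumes "1 < \<gamma>" and "\<gamma> < 2"
    and "\<exists>L. slowly_varying L \<and> (\<forall>t>0. tail d t = L t * t powr (- \<gamma>))"
    and "\<delta> > 0"
  shows "(\<forall>\<epsilon>>0. (\<lambda>n. measure_pmf.prob (CM d n)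
            {(D, m). \<bar>(\<Sum>i<n. real (D i) ^ p * real (Ye n D m i))
                     / real n powr (real p / \<gamma> + 2 - \<gamma> + \<delta>)\<bar> > \<epsilon>}) \<longlonglongrightarrow> 0)
    \<and> (\<forall>\<epsilon>>0. (\<lambda>n. measure_pmf.prob (CM d n)
            {(D, m). \<bar>(\<Sum>j<n. \<Sum>i<j. real (Ze n D m i j) * real (D i) * real (D j))
                     / real n powr (2 / \<gamma> + 2 - \<gamma> + \<delta>)\<bar> > \<epsilon>}) \<longlonglongrightarrow> 0)"
proof -
  obtain L where "slowly_varying L" "\<forall>t>0. tail d t = L t * t powr (- \<gamma>)"
    using assms(3) by blast
  then interpret regularly_varying_degrees d \<gamma> L
    using assms(1,2) by unfold_locales
  show ?thesis
    using weighted_Ye_tendsto_zero weighted_Ze_tendsto_zero \<open>\<delta> > 0\<close> by blast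
qed

end
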